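(* Let $d=n+1$, $u_k=e_k$ for $k=1,\dots,n$ and $u_{n+1}=e_1+\dots+e_n$; take $\lambda^{(j)}_k=0$ for $j=1,2,3$, $k=1,\dots,n$, and $\lambda^{(1)}_{n+1}=-\lambda$ with $\lambda>0$, $\lambda^{(2)}_{n+1}=\lambda^{(3)}_{n+1}=0$. Then the circle $N$ acts freely on $\mu^{-1}(0)$, the quotient $M=\mu^{-1}(0)/N$ is a smooth $4n$-manifold with two connected components, each diffeomorphic to $\mathbb R^{4n}$ and interchanged by the involution $\hat\sigma$, and the induced hypersymplectic structure on $M$ is non-degenerate everywhere.
   Context: Setting: $\mathbb C^{d,d}=\mathbb C^d\times\mathbb C^d$ with coordinates $(z,w)$, $g=\mathrm{Re}\sum_k(dz_k\,d\bar z_k-dw_k\,d\bar w_k)$, $I(z,w)=(iz,-iw)$, $S(z,w)=(w,z)$, $T=IS$, $\omega_A(Y,Z)=g(Y,AZ)$; $\mathbb T^d$ acts by $(z_k,w_k)\mapsto(e^{i\theta_k}z_k,e^{i\theta_k}w_k)$. With $u_1,\dots,u_d\in\mathbb Z^n$ spanning $\mathbb R^n$: $\beta\colon\mathbb R^d\to\mathbb R^n$, $e_k\mapsto u_k$; $\mathfrak n=\ker\beta$ with inclusion $\iota$; $N\subset\mathbb T^d$ the kernel of the induced homomorphism $\mathbb T^d\to\mathbb T^n$. Identify $\mathbb R^d$ with its dual. With real constants $\lambda^{(j)}_k$ and $\lambda^{(c)}_k=\lambda^{(2)}_k+i\lambda^{(3)}_k$: $\mu_I(z,w)=\sum_k(\tfrac12(|z_k|^2+|w_k|^2)+\lambda^{(1)}_k)\iota^*e_k$,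 $(\mu_S+i\mu_T)(z,w)=\sum_k(iz_k\bar w_k+\lambda^{(c)}_k)\iota^*e_k$, $M=\mu^{-1}(0)/N$. The induced forms $\omega'_A$ on $M$ satisfy $\pi^*\omega'_A=\omega_A|_{\mu^{-1}(0)}$. $\hat\sigma$ is the involution of $M$ induced by $\sigma(z,w)=(\bar w,\bar z)$. *)

theory Defs
  imports "HOL-Analysis.Analysis"
begin

type_synonym 'd cpt = "(complex^'d) \<times> (complex^'d)"

definition gH :: "'d::finite cpt \<Rightarrow> 'd cpt \<Rightarrow> real" where
  "gH Y Y' = Re (\<Sum>k\<in>UNIV. fst Y $ k * cnj (fst Y' $ k) - snd Y $ k * cnj (snd Y' $ k))"

definition opI :: "'d::finite cpt \<Rightarrow> 'd cpt" where
  "opI Y = ((\<chi> k. \<i> * fst Y $ k), (\<chi> k. - \<i> * snd Y $ k))"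

definition opS :: "'d::finite cpt \<Rightarrow> 'd cpt" where
  "opS Y = (snd Y, fst Y)"

definition opT :: "'d::finite cpt \<Rightarrow> 'd cpt" where
  "opT Y = opI (opS Y)"

definition omega :: "('d::finite cpt \<Rightarrow> 'd cpt) \<Rightarrow> 'd cpt \<Rightarrow> 'd cpt \<Rightarrow> real" where
  "omega A Y Y' = gH Y (A Y')"

text \<open>Action of the torus T^d (elements given as unit complex numbers t k).\<close>
definition torus_act :: "('d::finite \<Rightarrow> complex) \<Rightarrow> 'd cpt \<Rightarrow> 'd cpt" where
  "torus_act t p = ((\<chi> k. t k * fst p $ k), (\<chi> k. t k * snd p $ k))"

definition sigma :: "'d::finite cpt \<Rightarrow> 'd cpt" where
  "sigma p = ((\<chi> k. cnj (snd p $ k)), (\<chi> k. cnj (fst p $ k)))"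

text \<open>u k is the vector u_k in Z^n, with components u k j.
  beta : R^d -> R^n, e_k |-> u_k; its kernel is the Lie algebra n.\<close>
definition ker_beta :: "('d::finite \<Rightarrow> 'n::finite \<Rightarrow> int) \<Rightarrow> ('d \<Rightarrow> real) set" where
  "ker_beta u = {\<xi>. \<forall>j. (\<Sum>k\<in>UNIV. \<xi> k * of_int (u k j)) = 0}"

text \<open>N = kernel of the induced homomorphism T^d -> T^n, t |-> (prod_k t_k^(u_k)_j)_j.\<close>
definition kerN :: "('d::finite \<Rightarrow> 'n::finite \<Rightarrow> int) \<Rightarrow> ('d \<Rightarrow> complex) set" where
  "kerN u = {t. (\<forall>k. cmod (t k) = 1) \<and> (\<forall>j. (\<Prod>k\<in>UNIV. t k powi (u k j)) = 1)}"

text \<open>mu^{-1}(0): mu takes values in n^*; iota^* e_k pairs with xi in n as xi_k.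
  mu_I and mu_S + i mu_T vanish iff they vanish on every xi in n.\<close>
definition level_set ::
  "('d::finite \<Rightarrow> 'n::finite \<Rightarrow> int) \<Rightarrow> ('d \<Rightarrow> real) \<Rightarrow> ('d \<Rightarrow> complex) \<Rightarrow> 'd cpt set" where
  "level_set u l1 lc = {p. \<forall>\<xi>\<in>ker_beta u.
      (\<Sum>k\<in>UNIV. ((cmod (fst p $ k))\<^sup>2 + (cmod (snd p $ k))\<^sup>2) / 2 * \<xi> k + l1 k * \<xi> k) = 0
    \<and> (\<Sum>k\<in>UNIV. (\<i> * fst p $ k * cnj (snd p $ k) + lc k) * of_real (\<xi> k)) = 0}"

definition orbit :: "('d::finite \<Rightarrow> complex) set \<Rightarrow> 'd cpt \<Rightarrow> 'd cpt set" where
  "orbit N p = (\<lambda>t. torus_act t p) ` N"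

section \<open>The specific example: d = n+1, indices Some j (j = 1..n) and None (index n+1)\<close>

definition u_ex :: "'n::finite option \<Rightarrow> 'n \<Rightarrow> int" where
  "u_ex k j = (case k of Some i \<Rightarrow> (if i = j then 1 else 0) | None \<Rightarrow> 1)"

definition l1_ex :: "real \<Rightarrow> 'n::finite option \<Rightarrow> real" where
  "l1_ex lam k = (case k of Some i \<Rightarrow> 0 | None \<Rightarrow> - lam)"

definition dir_deriv :: "('a::real_normed_vector \<Rightarrow> 'b::real_normed_vector) \<Rightarrow> 'a \<Rightarrow> 'a \<Rightarrow> 'b" where
  "dir_deriv f v = (\<lambda>x. frechet_derivative f (at x) v)"

fun iter_dd :: "('a::real_normed_vector \<Rightarrow> 'b::real_normed_vector) \<Rightarrow> 'a list \<Rightarrow> 'a \<Rightarrow> 'b" where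
  "iter_dd f [] = f"
| "iter_dd f (v # vs) = dir_deriv (iter_dd f vs) v"

definition smooth_on :: "'a::real_normed_vector set \<Rightarrow> ('a \<Rightarrow> 'b::real_normed_vector) \<Rightarrow> bool" where
  "smooth_on U f \<longleftrightarrow> open U \<and> (\<forall>vs. iter_dd f vs differentiable_on U)"

definition smooth_on_set :: "'a::real_normed_vector set \<Rightarrow> ('a \<Rightarrow> 'b::real_normed_vector) \<Rightarrow> bool" where
  "smooth_on_set Z f \<longleftrightarrow> (\<forall>p\<in>Z. \<exists>U g. open U \<and> p \<in> U \<and> smooth_on U g \<and> (\<forall>x\<in>U \<inter> Z. g x = f x))"

definition embedded_submanifold :: "nat \<Rightarrow> 'a::euclidean_space set \<Rightarrow> bool" where
  "embedded_submanifold k Z \<longleftrightarrow> (\<forall>p\<in>Z. \<exists>U (\<phi>::'a \<Rightarrow> 'a) \<psi> L.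
      open U \<and> p \<in> U \<and> open (\<phi> ` U) \<and> smooth_on U \<phi> \<and> smooth_on (\<phi> ` U) \<psi>
      \<and> (\<forall>x\<in>U. \<psi> (\<phi> x) = x) \<and> subspace L \<and> dim L = k \<and> \<phi> ` (Z \<inter> U) = \<phi> ` U \<inter> L)"

definition tangent_space :: "'a::real_normed_vector set \<Rightarrow> 'a \<Rightarrow> 'a set" where
  "tangent_space Z p = {v. \<exists>\<gamma>. \<gamma> 0 = p \<and> (\<forall>t. \<gamma> t \<in> Z) \<and> (\<gamma> has_vector_derivative v) (at 0)}"

end

(*
  The circle N consists of the elements (s, conj s, ..., conj s), |s| = 1, of the torus; it rotates
  the head (z0, w0) of a point by s and its tail (z', w') by conj s. On the level set Z,
  |z0|^2 + |w0|^2 = 2 lam + |z'|^2 + |w'|^2 and z0 conj w0 = <z', w'>, so Cauchy-Schwarz and lam > 0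
  force |z0| <> |w0|. Hence N acts freely, and Z splits into the open pieces |w0| < |z0| and
  |z0| < |w0|, which sigma exchanges. On each piece, rotating the larger head coordinate onto the
  positive real axis leaves the rotated tail as a global coordinate in R^4n; conversely the square
  of the larger head norm is the larger root of rho^2 - R rho + |<z', w'>|^2, which gives a smooth
  section.
  Charts replacing the head by the three components of the moment map and one phase straighten Z,
  so T_p Z is the g-orthogonal complement of I X_p, S X_p, T X_p, where X_p generates the action.
  Since g(X_p, X_p) <> 0 on Z, linear algebra with the split-quaternion relations between I, S and
  T shows that on T_p Z the kernel of each omega_A is the orbit direction R X_p.
*)
theory Submission
  imports Defs
begin

section \<open>Smooth expressions\<close>

text \<open>The class is closed under directional derivatives, so its members are \<open>C\<^sup>\<infinity>\<close> on open
  sets.\<close>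

inductive smooth_expr :: "'a::real_normed_vector set \<Rightarrow> ('a \<Rightarrow> real) \<Rightarrow> bool" for U where
  const: "smooth_expr U (\<lambda>x. c)"
| linear: "bounded_linear l \<Longrightarrow> smooth_expr U l"
| add: "smooth_expr U f \<Longrightarrow> smooth_expr U g \<Longrightarrow> smooth_expr U (\<lambda>x. f x + g x)"
| mult: "smooth_expr U f \<Longrightarrow> smooth_expr U g \<Longrightarrow> smooth_expr U (\<lambda>x. f x * g x)"
| powr: "smooth_expr U f \<Longrightarrow> \<forall>x\<in>U. f x > 0 \<Longrightarrow> smooth_expr U (\<lambda>x. f x powr a)"
| cong: "smooth_expr U f \<Longrightarrow> \<forall>x\<in>U. f x = g x \<Longrightarrow> smooth_expr U g"

definition has_smooth_expr_derivatives :: "'a::real_normed_vector set \<Rightarrow> ('a \<Rightarrow> real) \<Rightarrow> bool" where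
  "has_smooth_expr_derivatives U f \<longleftrightarrow>
     (\<forall>x\<in>U. f differentiable (at x)) \<and> (\<forall>v. smooth_expr U (\<lambda>x. frechet_derivative f (at x) v))"

lemma has_smooth_expr_derivativesI:
  assumes "\<And>x. x \<in> U \<Longrightarrow> (f has_derivative D x) (at x)"
    and "\<And>v. smooth_expr U (\<lambda>x. D x v)"
  shows "has_smooth_expr_derivatives U f"
  unfolding has_smooth_expr_derivatives_def
proof (intro conjI ballI allI)
  show "f differentiable (at x)" if "x \<in> U" for x
    using assms(1)[OF that] by (auto simp: differentiable_def)
  show "smooth_expr U (\<lambda>x. frechet_derivative f (at x) v)" for v
    using assms(2)[of v] by (rule smooth_expr.cong) (simp add: frechet_derivative_at[OF assms(1)])
qed

lemma has_derivative_powr_const_exponent: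
  fixes f :: "'a::real_normed_vector \<Rightarrow> real"
  assumes "(f has_derivative f') (at x)" "f x > 0"
  shows "((\<lambda>x. f x powr a) has_derivative (\<lambda>h. a * f x powr (a - 1) * f' h)) (at x)"
proof -
  have "(\<lambda>h. f x powr a * (0 * ln (f x) + f' h * a / f x)) = (\<lambda>h. a * f x powr (a - 1) * f' h)"
    using assms(2) by (simp add: powr_diff fun_eq_iff)
  with has_derivative_powr[OF assms(1) has_derivative_const[of a] assms(2)] show ?thesis
    by simp
qed

lemma has_smooth_expr_derivatives_cong:
  assumes "open U" "has_smooth_expr_derivatives U f" "\<forall>x\<in>U. f x = g x"
  shows "has_smooth_expr_derivatives U g"
proof -
  have "(g has_derivative frechet_derivative f (at x)) (at x)" if "x \<in> U" for x
  proof -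
    have "(f has_derivative frechet_derivative f (at x)) (at x)"
      using assms(2) that frechet_derivative_works unfolding has_smooth_expr_derivatives_def by blast
    then show ?thesis
      by (rule has_derivative_transform_within_open[OF _ assms(1) that]) (use assms(3) in auto)
  qed
  then show ?thesis
    by (rule has_smooth_expr_derivativesI)
      (use assms(2) in \<open>auto simp: has_smooth_expr_derivatives_def\<close>)
qed

lemma smooth_expr_has_smooth_expr_derivatives:
  assumes "open U" "smooth_expr U f"
  shows "has_smooth_expr_derivatives U f"
  using assms(2)
proof induction
  case (const c)
  show ?case
    by (rule has_smooth_expr_derivativesI[where D = "\<lambda>x h. 0"]) (auto intro: smooth_expr.const)
next
  case (linear l)
  show ?case
    by (rule has_smooth_expr_derivativesI[where D = "\<lambda>x. l"])
      (auto intro: bounded_linear_imp_has_derivative linear.hyps smooth_expr.const)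
next
  case (add f g)
  then show ?case
    by (intro has_smooth_expr_derivativesI[where
          D = "\<lambda>x h. frechet_derivative f (at x) h + frechet_derivative g (at x) h"] has_derivative_add
          smooth_expr.add)
      (auto simp: has_smooth_expr_derivatives_def frechet_derivative_works)
next
  case (mult f g)
  then show ?case
    by (intro has_smooth_expr_derivativesI[where
          D = "\<lambda>x h. f x * frechet_derivative g (at x) h + frechet_derivative f (at x) h * g x"]
          has_derivative_mult smooth_expr.add smooth_expr.mult)
      (auto simp: has_smooth_expr_derivatives_def frechet_derivative_works)
next
  case (powr f a)
  let ?D = "\<lambda>x h. a * f x powr (a - 1) * frechet_derivative f (at x) h"
  have "((\<lambda>x. f x powr a) has_derivative ?D x) (at x)" if "x \<in> U" for x
    using powr that frechet_derivative_works unfolding has_smooth_expr_derivatives_def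
    by (blast intro: has_derivative_powr_const_exponent)
  then show ?case
    using powr
    by (intro has_smooth_expr_derivativesI[where D = ?D] smooth_expr.mult smooth_expr.powr
        smooth_expr.const) (auto simp: has_smooth_expr_derivatives_def)
next
  case (cong f g)
  then show ?case
    using has_smooth_expr_derivatives_cong[OF assms(1)] by blast
qed

lemma smooth_expr_differentiable_at:
  "open U \<Longrightarrow> smooth_expr U f \<Longrightarrow> x \<in> U \<Longrightarrow> f differentiable (at x)"
  using smooth_expr_has_smooth_expr_derivatives unfolding has_smooth_expr_derivatives_def by blast

lemma differentiable_transform_within_open:
  "f differentiable (at x) \<Longrightarrow> open U \<Longrightarrow> x \<in> U \<Longrightarrow> (\<And>y. y \<in> U \<Longrightarrow> f y = g y)
    \<Longrightarrow> g differentiable (at x)"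
  unfolding differentiable_def using has_derivative_transform_within_open by blast

lemma smooth_expr_imp_smooth_on:
  assumes "open U" "smooth_expr U f"
  shows "smooth_on U f"
proof -
  have "\<exists>g. smooth_expr U g \<and> (\<forall>x\<in>U. iter_dd f vs x = g x)" for vs
  proof (induction vs)
    case Nil
    show ?case using assms(2) by auto
  next
    case (Cons v vs)
    then obtain g where g: "smooth_expr U g" "\<forall>x\<in>U. iter_dd f vs x = g x" by blast
    have "iter_dd f (v # vs) x = frechet_derivative g (at x) v" if "x \<in> U" for x
      using frechet_derivative_transform_within_open[OF
          smooth_expr_differentiable_at[OF assms(1) g(1) that] assms(1) that, of "iter_dd f vs"] g(2)
      by (simp add: dir_deriv_def)
    then show ?case
      using smooth_expr_has_smooth_expr_derivatives[OF assms(1) g(1)]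
      unfolding has_smooth_expr_derivatives_def by auto
  qed
  then have "iter_dd f vs differentiable (at x)" if "x \<in> U" for vs x
    by (metis assms(1) differentiable_transform_within_open smooth_expr_differentiable_at that)
  then show ?thesis
    unfolding smooth_on_def using assms(1) by (simp add: differentiable_at_imp_differentiable_on)
qed

lemma smooth_expr_continuous_on: "open U \<Longrightarrow> smooth_expr U f \<Longrightarrow> continuous_on U f"
  by (meson continuous_at_imp_continuous_on differentiable_imp_continuous_within
      smooth_expr_differentiable_at)

lemma smooth_expr_cmult: "smooth_expr U f \<Longrightarrow> smooth_expr U (\<lambda>x. c * f x)"
  by (rule smooth_expr.mult[OF smooth_expr.const])

lemma smooth_expr_minus: "smooth_expr U f \<Longrightarrow> smooth_expr U (\<lambda>x. - f x)"
  by (rule smooth_expr.cong[OF smooth_expr_cmult[of U f "-1"]]) auto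

lemma smooth_expr_diff: "smooth_expr U f \<Longrightarrow> smooth_expr U g \<Longrightarrow> smooth_expr U (\<lambda>x. f x - g x)"
  using smooth_expr.add[OF _ smooth_expr_minus, of U f g] by simp

lemma smooth_expr_sum:
  "finite S \<Longrightarrow> (\<And>i. i \<in> S \<Longrightarrow> smooth_expr U (f i)) \<Longrightarrow> smooth_expr U (\<lambda>x. \<Sum>i\<in>S. f i x)"
  by (induction S rule: finite_induct) (auto intro: smooth_expr.const smooth_expr.add)

lemma smooth_expr_power2: "smooth_expr U f \<Longrightarrow> smooth_expr U (\<lambda>x. (f x)\<^sup>2)"
  by (rule smooth_expr.cong[OF smooth_expr.mult]) (auto simp: power2_eq_square)

lemma smooth_expr_sqrt: "smooth_expr U f \<Longrightarrow> \<forall>x\<in>U. f x > 0 \<Longrightarrow> smooth_expr U (\<lambda>x. sqrt (f x))"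
  by (rule smooth_expr.cong[OF smooth_expr.powr[of U f "1/2"]]) (auto simp: powr_half_sqrt)

lemma smooth_expr_divide:
  assumes "smooth_expr U f" "smooth_expr U g" "\<forall>x\<in>U. g x > 0"
  shows "smooth_expr U (\<lambda>x. f x / g x)"
proof -
  have "smooth_expr U (\<lambda>x. f x * g x powr -1)"
    using assms by (intro smooth_expr.mult smooth_expr.powr)
  then show ?thesis
    by (rule smooth_expr.cong) (use assms(3) in auto)
qed

lemma smooth_expr_compose_linear:
  assumes "smooth_expr U f" "bounded_linear L"
  shows "smooth_expr (L -` U) (\<lambda>x. f (L x))"
  using assms(1)
proof induction
  case (linear l)
  then show ?case using assms(2) by (intro smooth_expr.linear bounded_linear_compose[of l L])
qed (auto intro: smooth_expr.intros)

definition csmooth_expr :: "'a::real_normed_vector set \<Rightarrow> ('a \<Rightarrow> complex) \<Rightarrow> bool" where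
  "csmooth_expr U f \<longleftrightarrow> smooth_expr U (\<lambda>x. Re (f x)) \<and> smooth_expr U (\<lambda>x. Im (f x))"

lemma csmooth_expr_const: "csmooth_expr U (\<lambda>x. c)"
  by (simp add: csmooth_expr_def smooth_expr.const)

lemma csmooth_expr_linear: "bounded_linear f \<Longrightarrow> csmooth_expr U f"
  unfolding csmooth_expr_def
  by (auto intro!: smooth_expr.linear bounded_linear_compose[of Re f] bounded_linear_compose[of Im f]
      bounded_linear_Re bounded_linear_Im)

lemma csmooth_expr_add: "csmooth_expr U f \<Longrightarrow> csmooth_expr U g \<Longrightarrow> csmooth_expr U (\<lambda>x. f x + g x)"
  by (simp add: csmooth_expr_def smooth_expr.add)

lemma csmooth_expr_diff: "csmooth_expr U f \<Longrightarrow> csmooth_expr U g \<Longrightarrow> csmooth_expr U (\<lambda>x. f x - g x)"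
  by (simp add: csmooth_expr_def smooth_expr_diff)

lemma csmooth_expr_cnj: "csmooth_expr U f \<Longrightarrow> csmooth_expr U (\<lambda>x. cnj (f x))"
  by (simp add: csmooth_expr_def smooth_expr_minus)

lemma csmooth_expr_mult: "csmooth_expr U f \<Longrightarrow> csmooth_expr U g \<Longrightarrow> csmooth_expr U (\<lambda>x. f x * g x)"
  unfolding csmooth_expr_def by (auto intro!: smooth_expr.add smooth_expr_diff smooth_expr.mult)

lemma csmooth_expr_of_real: "smooth_expr U f \<Longrightarrow> csmooth_expr U (\<lambda>x. complex_of_real (f x))"
  by (simp add: csmooth_expr_def smooth_expr.const)

lemma csmooth_expr_Complex:
  "smooth_expr U f \<Longrightarrow> smooth_expr U g \<Longrightarrow> csmooth_expr U (\<lambda>x. Complex (f x) (g x))"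
  by (simp add: csmooth_expr_def)

lemma csmooth_expr_sum:
  "finite S \<Longrightarrow> (\<And>i. i \<in> S \<Longrightarrow> csmooth_expr U (f i)) \<Longrightarrow> csmooth_expr U (\<lambda>x. \<Sum>i\<in>S. f i x)"
  unfolding csmooth_expr_def by (auto simp: Re_sum Im_sum intro!: smooth_expr_sum)

lemma csmooth_expr_divide_real:
  "csmooth_expr U f \<Longrightarrow> smooth_expr U g \<Longrightarrow> \<forall>x\<in>U. g x > 0
    \<Longrightarrow> csmooth_expr U (\<lambda>x. f x / complex_of_real (g x))"
  unfolding csmooth_expr_def
  by (auto simp: Re_divide_of_real Im_divide_of_real intro!: smooth_expr_divide)

lemma smooth_expr_Re: "csmooth_expr U f \<Longrightarrow> smooth_expr U (\<lambda>x. Re (f x))"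
  by (simp add: csmooth_expr_def)

lemma smooth_expr_Im: "csmooth_expr U f \<Longrightarrow> smooth_expr U (\<lambda>x. Im (f x))"
  by (simp add: csmooth_expr_def)

lemma smooth_expr_cmod_power2: "csmooth_expr U f \<Longrightarrow> smooth_expr U (\<lambda>x. (cmod (f x))\<^sup>2)"
  unfolding csmooth_expr_def cmod_power2 by (intro smooth_expr.add smooth_expr_power2) auto

lemma smooth_expr_cmod:
  assumes "csmooth_expr U f" "\<forall>x\<in>U. f x \<noteq> 0"
  shows "smooth_expr U (\<lambda>x. cmod (f x))"
  using smooth_expr_sqrt[OF smooth_expr_cmod_power2[OF assms(1)]] assms(2) by simp

lemma smooth_on_iter_dd_differentiable:
  assumes "smooth_on U f" "x \<in> U"
  shows "iter_dd f vs differentiable (at x)"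
proof -
  have "open U" "iter_dd f vs differentiable_on U"
    using assms(1) unfolding smooth_on_def by blast+
  then show ?thesis
    using assms(2) by (simp add: differentiable_on_eq_differentiable_at)
qed

lemma smooth_on_differentiable: "smooth_on U f \<Longrightarrow> x \<in> U \<Longrightarrow> f differentiable (at x)"
  using smooth_on_iter_dd_differentiable[of U f x "[]"] by simp

lemma iter_dd_Cons_inner:
  assumes U: "open U" "x \<in> U" and d: "iter_dd f vs differentiable (at x)"
    and eq: "\<And>y. y \<in> U \<Longrightarrow> iter_dd f vs y \<bullet> b = iter_dd (\<lambda>y. f y \<bullet> b) vs y"
  shows "iter_dd f (v # vs) x \<bullet> b = iter_dd (\<lambda>y. f y \<bullet> b) (v # vs) x"
proof -
  have "((\<lambda>y. iter_dd f vs y \<bullet> b) has_derivative (\<lambda>h. dir_deriv (iter_dd f vs) h x \<bullet> b)) (at x)"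
    using d by (auto intro!: derivative_eq_intros simp: dir_deriv_def frechet_derivative_works)
  then have "iter_dd f (v # vs) x \<bullet> b = frechet_derivative (\<lambda>y. iter_dd f vs y \<bullet> b) (at x) v"
    by (simp add: dir_deriv_def frechet_derivative_at[symmetric])
  also have "\<dots> = iter_dd (\<lambda>y. f y \<bullet> b) (v # vs) x"
    using frechet_derivative_transform_within_open[OF _ U eq] d by (simp add: dir_deriv_def)
  finally show ?thesis .
qed

lemma smooth_on_componentwise:
  fixes f :: "'a::real_normed_vector \<Rightarrow> 'b::euclidean_space"
  assumes U: "open U" and smooth: "\<forall>b\<in>Basis. smooth_on U (\<lambda>x. f x \<bullet> b)"
  shows "smooth_on U f"
proof -
  have "\<forall>x\<in>U. iter_dd f vs differentiable (at x)
      \<and> (\<forall>b\<in>Basis. iter_dd f vs x \<bullet> b = iter_dd (\<lambda>y. f y \<bullet> b) vs x)" for vs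
  proof (induction vs)
    case Nil
    then show ?case
      using smooth_on_differentiable smooth differentiable_componentwise_within[of f _ UNIV] by auto
  next
    case (Cons v vs)
    have comp: "iter_dd f (v # vs) x \<bullet> b = iter_dd (\<lambda>y. f y \<bullet> b) (v # vs) x"
      if "x \<in> U" "b \<in> Basis" for x b
      by (rule iter_dd_Cons_inner[OF U that(1)]) (use Cons that in auto)
    have "(\<lambda>y. iter_dd f (v # vs) y \<bullet> b) differentiable (at x)" if "x \<in> U" "b \<in> Basis" for x b
    proof -
      have "iter_dd (\<lambda>y. f y \<bullet> b) (v # vs) differentiable (at x)"
        using smooth_on_iter_dd_differentiable smooth that by blast
      then show ?thesis
        by (rule differentiable_transform_within_open[OF _ U that(1)]) (use comp that in auto)
    qed
    then show ?case
      using comp differentiable_componentwise_within[of "iter_dd f (v # vs)" _ UNIV] by auto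
  qed
  then show ?thesis
    unfolding smooth_on_def using U by (simp add: differentiable_at_imp_differentiable_on)
qed

lemma smooth_expr_imp_smooth_on_componentwise:
  fixes f :: "'a::real_normed_vector \<Rightarrow> 'b::euclidean_space"
  assumes "open U" "\<forall>b\<in>Basis. smooth_expr U (\<lambda>x. f x \<bullet> b)"
  shows "smooth_on U f"
  by (rule smooth_on_componentwise[OF assms(1)]) (use assms smooth_expr_imp_smooth_on in blast)

section \<open>The flat model\<close>

lemma gH_eq_sum_Re_Im:
  "gH Y Y' = (\<Sum>k\<in>UNIV. Re (fst Y $ k) * Re (fst Y' $ k) + Im (fst Y $ k) * Im (fst Y' $ k)
     - Re (snd Y $ k) * Re (snd Y' $ k) - Im (snd Y $ k) * Im (snd Y' $ k))"
  unfolding gH_def by (simp add: Re_sum algebra_simps)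

lemma gH_commute: "gH a b = gH b a"
  unfolding gH_eq_sum_Re_Im by (simp add: algebra_simps)

lemma bounded_bilinear_gH: "bounded_bilinear (gH :: 'd::finite cpt \<Rightarrow> 'd cpt \<Rightarrow> real)"
proof -
  have left: "linear (\<lambda>a. gH a b)" for b :: "'d cpt"
    by (rule linearI)
      (simp_all add: gH_eq_sum_Re_Im algebra_simps sum.distrib[symmetric] sum_distrib_left)
  have "(\<lambda>b. gH a b) = (\<lambda>b. gH b a)" for a :: "'d cpt"
    by (simp add: gH_commute[of a])
  then have "bilinear (gH :: 'd cpt \<Rightarrow> 'd cpt \<Rightarrow> real)"
    unfolding bilinear_def using left by metis
  then show ?thesis by (simp add: bilinear_conv_bounded_bilinear)
qed

lemmas gH_add_left = bounded_bilinear.add_left[OF bounded_bilinear_gH]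
lemmas gH_add_right = bounded_bilinear.add_right[OF bounded_bilinear_gH]
lemmas gH_diff_left = bounded_bilinear.diff_left[OF bounded_bilinear_gH]
lemmas gH_diff_right = bounded_bilinear.diff_right[OF bounded_bilinear_gH]
lemmas gH_minus_left = bounded_bilinear.minus_left[OF bounded_bilinear_gH]
lemmas gH_minus_right = bounded_bilinear.minus_right[OF bounded_bilinear_gH]
lemmas gH_scaleR_left = bounded_bilinear.scaleR_left[OF bounded_bilinear_gH]
lemmas gH_scaleR_right = bounded_bilinear.scaleR_right[OF bounded_bilinear_gH]
lemmas gH_bilinear_simps = gH_add_left gH_add_right gH_diff_left gH_diff_right gH_minus_left
  gH_minus_right gH_scaleR_left gH_scaleR_right

lemma gH_nondegenerate:
  assumes "\<And>e. gH a e = 0"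
  shows "a = 0"
proof -
  let ?s = "\<lambda>k. (Re (fst a $ k))\<^sup>2 + (Im (fst a $ k))\<^sup>2 + (Re (snd a $ k))\<^sup>2 + (Im (snd a $ k))\<^sup>2"
  have "gH a (fst a, - snd a) = 0" by (rule assms)
  then have "(\<Sum>k\<in>UNIV. ?s k) = 0"
    unfolding gH_eq_sum_Re_Im by (simp add: power2_eq_square)
  then have "\<forall>k\<in>UNIV. ?s k = 0"
    by (subst sum_nonneg_eq_0_iff[symmetric]) auto
  then show ?thesis
    by (auto simp: prod_eq_iff vec_eq_iff complex_eq_iff add_nonneg_eq_0_iff)
qed

lemma linear_opI: "linear opI"
  by (rule linearI) (simp_all add: opI_def vec_eq_iff prod_eq_iff algebra_simps scaleR_conv_of_real)

lemma linear_opS: "linear opS"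
  by (rule linearI) (simp_all add: opS_def)

lemma linear_opT: "linear opT"
  using linear_compose[OF linear_opS linear_opI] by (simp add: opT_def[abs_def] o_def)

lemmas op_linear_simps =
  linear_add[OF linear_opI] linear_add[OF linear_opS] linear_add[OF linear_opT]
  linear_diff[OF linear_opI] linear_diff[OF linear_opS] linear_diff[OF linear_opT]
  linear_neg[OF linear_opI] linear_neg[OF linear_opS] linear_neg[OF linear_opT]
  linear_scale[OF linear_opI] linear_scale[OF linear_opS] linear_scale[OF linear_opT]

lemma op_table [simp]:
  "opI (opI a) = - a" "opS (opS a) = a" "opT (opT a) = a"
  "opI (opS a) = opT a" "opS (opI a) = - opT a"
  "opI (opT a) = - opS a" "opT (opI a) = opS a"
  "opS (opT a) = - opI a" "opT (opS a) = opI a"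
  by (simp_all add: opT_def opI_def opS_def vec_eq_iff prod_eq_iff)

lemma gH_opI_opI: "gH (opI a) (opI b) = gH a b"
  unfolding gH_eq_sum_Re_Im opI_def by (simp add: algebra_simps)

lemma gH_opS_opS: "gH (opS a) (opS b) = - gH a b"
  unfolding gH_eq_sum_Re_Im opS_def by (simp add: algebra_simps sum_subtractf sum.distrib)

text \<open>Oriented this way, these simp rules move every operator into the second argument of \<open>g\<close>.\<close>

lemma gH_op_skew [simp]:
  "gH (opI a) b = - gH a (opI b)" "gH (opS a) b = - gH a (opS b)" "gH (opT a) b = - gH a (opT b)"
proof -
  have I: "gH (opI x) y = - gH x (opI y)" for x y :: "'d::finite cpt"
    using gH_opI_opI[of x "opI y"] by (simp add: gH_minus_right)
  have S: "gH (opS x) y = - gH x (opS y)" for x y :: "'d::finite cpt"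
    using gH_opS_opS[of x "opS y"] by simp
  have "gH (opT a) b = - gH (opS a) (opI b)"
    unfolding opT_def by (rule I)
  also have "\<dots> = - gH a (opT b)"
    by (simp only: S op_table gH_minus_right minus_minus)
  finally show "gH (opT a) b = - gH a (opT b)" .
  show "gH (opI a) b = - gH a (opI b)" "gH (opS a) b = - gH a (opS b)"
    by (fact I S)+
qed

lemma gH_op_self [simp]: "gH a (opI a) = 0" "gH a (opS a) = 0" "gH a (opT a) = 0"
  using gH_op_skew[of a a] gH_commute[of a "opI a"] gH_commute[of a "opS a"] gH_commute[of a "opT a"]
  by linarith+

lemma gH_op_skew_general:
  "A \<in> {opI, opS, opT} \<Longrightarrow> gH a (A b) = - gH (A a) b"
  by auto

lemma smooth_expr_cpt_components:
  fixes f :: "'a::real_normed_vector \<Rightarrow> ('d::finite) cpt"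
  assumes "\<And>k. csmooth_expr U (\<lambda>x. fst (f x) $ k)" "\<And>k. csmooth_expr U (\<lambda>x. snd (f x) $ k)"
  shows "\<forall>b\<in>Basis. smooth_expr U (\<lambda>x. f x \<bullet> b)"
  using assms unfolding csmooth_expr_def
  by (auto simp: Basis_prod_def Basis_vec_def inner_axis Basis_complex_def inner_prod_def
      inner_complex_def)

lemma csmooth_expr_fst_nth: "csmooth_expr U (\<lambda>x::('d::finite) cpt. fst x $ k)"
  by (rule csmooth_expr_linear)
    (intro bounded_linear_compose[of "\<lambda>v. v $ k" fst] bounded_linear_vec_nth bounded_linear_fst)

lemma csmooth_expr_snd_nth: "csmooth_expr U (\<lambda>x::('d::finite) cpt. snd x $ k)"
  by (rule csmooth_expr_linear)
    (intro bounded_linear_compose[of "\<lambda>v. v $ k" snd] bounded_linear_vec_nth bounded_linear_snd)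

section \<open>Nondegeneracy on the orthocomplement of a quaternionic frame\<close>

definition frame_perp :: "'d::finite cpt \<Rightarrow> 'd cpt set" where
  "frame_perp X = {Y. gH (opI X) Y = 0 \<and> gH (opS X) Y = 0 \<and> gH (opT X) Y = 0}"

lemma self_in_frame_perp: "X \<in> frame_perp X"
  by (simp add: frame_perp_def)

lemma frame_perp_coeffs:
  assumes "gH X X \<noteq> 0"
    and "a *\<^sub>R X + b *\<^sub>R opI X + c *\<^sub>R opS X + d *\<^sub>R opT X \<in> frame_perp X"
  shows "b = 0 \<and> c = 0 \<and> d = 0"
  using assms by (simp add: frame_perp_def op_linear_simps gH_bilinear_simps)

lemma perp_frame_perp_in_frame_span:
  assumes q: "gH X X \<noteq> 0" and Z: "\<forall>Y\<in>frame_perp X. gH Z Y = 0"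
  shows "\<exists>b c d. Z = b *\<^sub>R opI X + c *\<^sub>R opS X + d *\<^sub>R opT X"
proof -
  let ?q = "gH X X"
  define W where "W = (gH Z (opI X) / ?q) *\<^sub>R opI X - (gH Z (opS X) / ?q) *\<^sub>R opS X
    - (gH Z (opT X) / ?q) *\<^sub>R opT X"
  have "gH (Z - W) e = 0" for e
  proof -
    let ?proj = "e - (gH (opI X) e / ?q) *\<^sub>R opI X + (gH (opS X) e / ?q) *\<^sub>R opS X
      + (gH (opT X) e / ?q) *\<^sub>R opT X"
    have "?proj \<in> frame_perp X"
      using q by (simp add: frame_perp_def op_linear_simps gH_bilinear_simps)
    then have "gH Z ?proj = 0" using Z by blast
    then show ?thesis
      using q by (simp add: W_def op_linear_simps gH_bilinear_simps field_simps gH_commute[of Z])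
  qed
  then have "Z = W" using gH_nondegenerate[of "Z - W"] by simp
  then show ?thesis unfolding W_def by (metis diff_conv_add_uminus scaleR_minus_left)
qed

lemma op_frame_span:
  assumes "A \<in> {opI, opS, opT}" "A Y = b *\<^sub>R opI X + c *\<^sub>R opS X + d *\<^sub>R opT X"
  shows "\<exists>a b' c' d'. Y = a *\<^sub>R X + b' *\<^sub>R opI X + c' *\<^sub>R opS X + d' *\<^sub>R opT X"
proof -
  from assms(1) consider "A = opI" | "A = opS" | "A = opT" by blast
  then show ?thesis
  proof cases
    case 1
    have "Y = - opI (A Y)" using 1 by simp
    then have "Y = b *\<^sub>R X + 0 *\<^sub>R opI X + d *\<^sub>R opS X + (- c) *\<^sub>R opT X"
      using assms(2) by (simp add: op_linear_simps)
    then show ?thesis by blast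
  next
    case 2
    have "Y = opS (A Y)" using 2 by simp
    then have "Y = c *\<^sub>R X + (- d) *\<^sub>R opI X + 0 *\<^sub>R opS X + (- b) *\<^sub>R opT X"
      using assms(2) by (simp add: op_linear_simps)
    then show ?thesis by blast
  next
    case 3
    have "Y = opT (A Y)" using 3 by simp
    then have "Y = d *\<^sub>R X + c *\<^sub>R opI X + b *\<^sub>R opS X + 0 *\<^sub>R opT X"
      using assms(2) by (simp add: op_linear_simps)
    then show ?thesis by blast
  qed
qed

lemma omega_kernel_frame_perp:
  assumes q: "gH X X \<noteq> 0" and A: "A \<in> {opI, opS, opT}"
  shows "{Y \<in> frame_perp X. \<forall>Y'\<in>frame_perp X. gH Y (A Y') = 0} = range (\<lambda>a. a *\<^sub>R X)"
proof (intro set_eqI iffI)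
  fix Y assume "Y \<in> range (\<lambda>a. a *\<^sub>R X)"
  then obtain a where Y: "Y = a *\<^sub>R X" by blast
  have "gH X (A Y') = 0" if "Y' \<in> frame_perp X" for Y'
    using A that unfolding frame_perp_def by auto
  then show "Y \<in> {Y \<in> frame_perp X. \<forall>Y'\<in>frame_perp X. gH Y (A Y') = 0}"
    using self_in_frame_perp[of X] unfolding Y frame_perp_def
    by (simp add: gH_scaleR_left gH_scaleR_right op_linear_simps)
next
  fix Y assume "Y \<in> {Y \<in> frame_perp X. \<forall>Y'\<in>frame_perp X. gH Y (A Y') = 0}"
  then have Y: "Y \<in> frame_perp X" and "\<forall>Y'\<in>frame_perp X. gH Y (A Y') = 0"
    by auto
  then have "\<forall>Y'\<in>frame_perp X. gH (A Y) Y' = 0"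
    by (simp add: gH_op_skew_general[OF A])
  then obtain b c d where "A Y = b *\<^sub>R opI X + c *\<^sub>R opS X + d *\<^sub>R opT X"
    using perp_frame_perp_in_frame_span[OF q] by blast
  then obtain a b' c' d' where span: "Y = a *\<^sub>R X + b' *\<^sub>R opI X + c' *\<^sub>R opS X + d' *\<^sub>R opT X"
    using op_frame_span[OF A] by blast
  then have "b' = 0 \<and> c' = 0 \<and> d' = 0"
    using frame_perp_coeffs[OF q, of a b' c' d'] Y by blast
  then show "Y \<in> range (\<lambda>a. a *\<^sub>R X)" using span by auto
qed

section \<open>The level set and the circle action\<close>

lemma sum_UNIV_option: "(\<Sum>k\<in>UNIV. f k) = f None + (\<Sum>j\<in>UNIV. f (Some j :: 'n::finite option))"
  by (simp add: UNIV_option_conv sum.reindex)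

lemma prod_UNIV_option: "(\<Prod>k\<in>UNIV. f k) = f None * (\<Prod>j\<in>UNIV. f (Some j :: 'n::finite option))"
  by (simp add: UNIV_option_conv prod.reindex)

lemma unit_mult_cnj: "cmod s = 1 \<Longrightarrow> s * cnj s = 1"
  using complex_norm_square[of s] by simp

text \<open>The index \<open>None\<close> is the extra index \<open>n + 1\<close>; we call its coordinates the head of a point
  and the remaining ones its tail.\<close>

abbreviation head_z :: "'n::finite option cpt \<Rightarrow> complex" where
  "head_z x \<equiv> fst x $ None"

abbreviation head_w :: "'n::finite option cpt \<Rightarrow> complex" where
  "head_w x \<equiv> snd x $ None"

definition tail_z2 :: "'n::finite option cpt \<Rightarrow> real" where
  "tail_z2 x = (\<Sum>j\<in>UNIV. (cmod (fst x $ Some j))\<^sup>2)"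

definition tail_w2 :: "'n::finite option cpt \<Rightarrow> real" where
  "tail_w2 x = (\<Sum>j\<in>UNIV. (cmod (snd x $ Some j))\<^sup>2)"

definition tail_pairing :: "'n::finite option cpt \<Rightarrow> complex" where
  "tail_pairing x = (\<Sum>j\<in>UNIV. fst x $ Some j * cnj (snd x $ Some j))"

definition level_ex :: "real \<Rightarrow> 'n::finite option cpt set" where
  "level_ex lam = {x. (cmod (head_z x))\<^sup>2 + (cmod (head_w x))\<^sup>2 = 2 * lam + tail_z2 x + tail_w2 x
                    \<and> head_z x * cnj (head_w x) = tail_pairing x}"

lemma tail_z2_nonneg: "tail_z2 x \<ge> 0"
  unfolding tail_z2_def by (simp add: sum_nonneg)

lemma tail_w2_nonneg: "tail_w2 x \<ge> 0"
  unfolding tail_w2_def by (simp add: sum_nonneg)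

lemma tail_pairing_bound: "(cmod (tail_pairing x))\<^sup>2 \<le> tail_z2 x * tail_w2 x"
proof -
  have "cmod (tail_pairing x) \<le> (\<Sum>j\<in>UNIV. cmod (fst x $ Some j) * cmod (snd x $ Some j))"
    unfolding tail_pairing_def by (rule order_trans[OF norm_sum]) (simp add: norm_mult)
  then have "(cmod (tail_pairing x))\<^sup>2 \<le> (\<Sum>j\<in>UNIV. cmod (fst x $ Some j) * cmod (snd x $ Some j))\<^sup>2"
    by (simp add: power_mono)
  also have "\<dots> \<le> tail_z2 x * tail_w2 x"
    unfolding tail_z2_def tail_w2_def by (rule Cauchy_Schwarz_ineq_sum)
  finally show ?thesis .
qed

lemma ker_beta_ex: "ker_beta (u_ex :: 'n::finite option \<Rightarrow> 'n \<Rightarrow> int) = {\<xi>. \<forall>j. \<xi> (Some j) = - \<xi> None}"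
proof -
  have "(\<Sum>k\<in>UNIV. \<xi> k * of_int (u_ex k j)) = \<xi> None + \<xi> (Some j)" for \<xi> :: "'n option \<Rightarrow> real" and j
  proof -
    have "(\<Sum>i\<in>UNIV. \<xi> (Some i) * of_int (u_ex (Some i) j)) = (\<Sum>i\<in>UNIV. if i = j then \<xi> (Some i) else 0)"
      by (rule sum.cong) (auto simp: u_ex_def)
    then show ?thesis by (simp add: sum_UNIV_option u_ex_def)
  qed
  then show ?thesis
    unfolding ker_beta_def by (auto simp: algebra_simps eq_neg_iff_add_eq_0)
qed

lemma moment_I_ex:
  assumes "\<forall>j. \<xi> (Some j) = - \<xi> None"
  shows "(\<Sum>k\<in>UNIV. ((cmod (fst p $ k))\<^sup>2 + (cmod (snd p $ k))\<^sup>2) / 2 * \<xi> k + l1_ex lam k * \<xi> k)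
    = \<xi> None / 2 * ((cmod (head_z p))\<^sup>2 + (cmod (head_w p))\<^sup>2 - 2 * lam - tail_z2 p - tail_w2 p)"
proof -
  let ?m = "\<lambda>k. (cmod (fst p $ k))\<^sup>2 + (cmod (snd p $ k))\<^sup>2"
  have "(\<Sum>j\<in>UNIV. ?m (Some j) / 2 * \<xi> (Some j) + l1_ex lam (Some j) * \<xi> (Some j))
      = (\<Sum>j\<in>UNIV. (- \<xi> None / 2) * ?m (Some j))"
    by (rule sum.cong) (use assms in \<open>auto simp: l1_ex_def\<close>)
  also have "\<dots> = (- \<xi> None / 2) * (tail_z2 p + tail_w2 p)"
    by (simp only: sum_distrib_left[symmetric] tail_z2_def tail_w2_def sum.distrib)
  finally have tail: "(\<Sum>j\<in>UNIV. ?m (Some j) / 2 * \<xi> (Some j) + l1_ex lam (Some j) * \<xi> (Some j))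
      = (- \<xi> None / 2) * (tail_z2 p + tail_w2 p)" .
  show ?thesis
    unfolding sum_UNIV_option[where f = "\<lambda>k. ?m k / 2 * \<xi> k + l1_ex lam k * \<xi> k"] tail
    by (simp add: l1_ex_def field_simps)
qed

lemma moment_c_ex:
  assumes "\<forall>j. \<xi> (Some j) = - \<xi> None"
  shows "(\<Sum>k\<in>UNIV. (\<i> * fst p $ k * cnj (snd p $ k) + 0) * of_real (\<xi> k))
    = \<i> * of_real (\<xi> None) * (head_z p * cnj (head_w p) - tail_pairing p)"
proof -
  have "(\<Sum>j\<in>UNIV. (\<i> * fst p $ Some j * cnj (snd p $ Some j) + 0) * of_real (\<xi> (Some j)))
      = (\<Sum>j\<in>UNIV. (- \<i> * of_real (\<xi> None)) * (fst p $ Some j * cnj (snd p $ Some j)))"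
    by (rule sum.cong) (use assms in \<open>auto simp: algebra_simps\<close>)
  also have "\<dots> = (- \<i> * of_real (\<xi> None)) * tail_pairing p"
    unfolding tail_pairing_def by (rule sum_distrib_left[symmetric])
  finally have tail: "(\<Sum>j\<in>UNIV. (\<i> * fst p $ Some j * cnj (snd p $ Some j) + 0) * of_real (\<xi> (Some j)))
      = (- \<i> * of_real (\<xi> None)) * tail_pairing p" .
  show ?thesis
    unfolding sum_UNIV_option[where f = "\<lambda>k. (\<i> * fst p $ k * cnj (snd p $ k) + 0) * of_real (\<xi> k)"]
      tail
    by (simp add: algebra_simps)
qed

lemma level_set_ex:
  "level_set (u_ex :: 'n::finite option \<Rightarrow> 'n \<Rightarrow> int) (l1_ex lam) (\<lambda>_. 0) = level_ex lam"
proof (intro set_eqI iffI)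
  fix p :: "'n option cpt"
  let ?\<xi> = "\<lambda>k::'n option. case k of None \<Rightarrow> (1::real) | Some _ \<Rightarrow> -1"
  have \<xi>: "\<forall>j. ?\<xi> (Some j) = - ?\<xi> None" by simp
  assume "p \<in> level_set u_ex (l1_ex lam) (\<lambda>_. 0)"
  moreover have "?\<xi> \<in> ker_beta (u_ex :: 'n option \<Rightarrow> 'n \<Rightarrow> int)"
    by (simp add: ker_beta_ex)
  ultimately have
    "(\<Sum>k\<in>UNIV. ((cmod (fst p $ k))\<^sup>2 + (cmod (snd p $ k))\<^sup>2) / 2 * ?\<xi> k + l1_ex lam k * ?\<xi> k) = 0"
    "(\<Sum>k\<in>UNIV. (\<i> * fst p $ k * cnj (snd p $ k) + 0) * of_real (?\<xi> k)) = 0"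
    unfolding level_set_def by blast+
  then show "p \<in> level_ex lam"
    unfolding moment_I_ex[OF \<xi>] moment_c_ex[OF \<xi>] level_ex_def by simp
next
  fix p :: "'n option cpt"
  assume p: "p \<in> level_ex lam"
  show "p \<in> level_set u_ex (l1_ex lam) (\<lambda>_. 0)"
    unfolding level_set_def
  proof (intro CollectI ballI)
    fix \<xi> assume "\<xi> \<in> ker_beta (u_ex :: 'n option \<Rightarrow> 'n \<Rightarrow> int)"
    then have \<xi>: "\<forall>j. \<xi> (Some j) = - \<xi> None" by (simp add: ker_beta_ex)
    show "(\<Sum>k\<in>UNIV. ((cmod (fst p $ k))\<^sup>2 + (cmod (snd p $ k))\<^sup>2) / 2 * \<xi> k + l1_ex lam k * \<xi> k) = 0
      \<and> (\<Sum>k\<in>UNIV. (\<i> * fst p $ k * cnj (snd p $ k) + 0) * of_real (\<xi> k)) = 0"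
      unfolding moment_I_ex[OF \<xi>] moment_c_ex[OF \<xi>] using p by (simp add: level_ex_def)
  qed
qed

definition circle_ex :: "complex \<Rightarrow> 'n::finite option \<Rightarrow> complex" where
  "circle_ex s k = (case k of None \<Rightarrow> s | Some _ \<Rightarrow> cnj s)"

lemma kerN_ex: "kerN (u_ex :: 'n::finite option \<Rightarrow> 'n \<Rightarrow> int) = circle_ex ` {s. cmod s = 1}"
proof -
  have prod: "(\<Prod>k\<in>UNIV. t k powi (u_ex k j)) = t None * t (Some j)" for t :: "'n option \<Rightarrow> complex" and j
    by (simp add: prod_UNIV_option u_ex_def if_distrib[of "\<lambda>c. _ powi c"] cong: if_cong)
  show ?thesis
  proof (intro set_eqI iffI)
    fix t :: "'n option \<Rightarrow> complex"
    assume "t \<in> kerN u_ex"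
    then have unit: "cmod (t None) = 1" and inv: "\<forall>j. t None * t (Some j) = 1"
      unfolding kerN_def prod by auto
    have "t (Some j) = cnj (t None)" for j
      using inv unit_mult_cnj[OF unit] by (metis mult.commute mult.left_neutral mult.assoc)
    then have "t = circle_ex (t None)"
      by (auto simp: circle_ex_def fun_eq_iff split: option.splits)
    then show "t \<in> circle_ex ` {s. cmod s = 1}" using unit by blast
  next
    fix t :: "'n option \<Rightarrow> complex"
    assume "t \<in> circle_ex ` {s. cmod s = 1}"
    then show "t \<in> kerN u_ex"
      unfolding kerN_def prod by (auto simp: circle_ex_def unit_mult_cnj split: option.splits)
  qed
qed

lemma circle_act_nth [simp]:
  "fst (torus_act (circle_ex s) p) $ None = s * fst p $ None"
  "snd (torus_act (circle_ex s) p) $ None = s * snd p $ None"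
  "fst (torus_act (circle_ex s) p) $ Some j = cnj s * fst p $ Some j"
  "snd (torus_act (circle_ex s) p) $ Some j = cnj s * snd p $ Some j"
  by (simp_all add: torus_act_def circle_ex_def)

lemma circle_act_mult:
  "torus_act (circle_ex s) (torus_act (circle_ex s') p) = torus_act (circle_ex (s * s')) p"
  by (simp add: torus_act_def circle_ex_def vec_eq_iff algebra_simps split: option.splits)

lemma orbit_ex:
  "orbit (kerN (u_ex :: 'n::finite option \<Rightarrow> 'n \<Rightarrow> int)) p = {torus_act (circle_ex s) p | s. cmod s = 1}"
  unfolding orbit_def kerN_ex by auto

lemma circle_act_tail [simp]:
  assumes "cmod s = 1"
  shows "tail_z2 (torus_act (circle_ex s) p) = tail_z2 p"
    and "tail_w2 (torus_act (circle_ex s) p) = tail_w2 p"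
    and "tail_pairing (torus_act (circle_ex s) p) = tail_pairing p"
proof -
  have rot: "cnj s * a * cnj (cnj s * b) = a * cnj b" for a b
    using unit_mult_cnj[OF assms] by (simp add: algebra_simps)
  show "tail_pairing (torus_act (circle_ex s) p) = tail_pairing p"
    by (simp only: tail_pairing_def circle_act_nth rot)
qed (use assms in \<open>simp_all add: tail_z2_def tail_w2_def norm_mult\<close>)

lemma circle_act_level_ex:
  assumes "cmod s = 1" "p \<in> level_ex lam"
  shows "torus_act (circle_ex s) p \<in> level_ex lam"
proof -
  have "s * a * cnj (s * b) = a * cnj b" for a b
    using unit_mult_cnj[OF assms(1)] by (simp add: algebra_simps)
  then have "head_z (torus_act (circle_ex s) p) * cnj (head_w (torus_act (circle_ex s) p))
      = head_z p * cnj (head_w p)"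
    unfolding circle_act_nth .
  then show ?thesis
    using assms unfolding level_ex_def mem_Collect_eq by (simp add: norm_mult)
qed

definition circle_weight :: "'n::finite option \<Rightarrow> real" where
  "circle_weight k = (case k of None \<Rightarrow> 1 | Some _ \<Rightarrow> -1)"

definition circle_generator :: "'n::finite option cpt \<Rightarrow> 'n option cpt" where
  "circle_generator x = ((\<chi> k. \<i> * of_real (circle_weight k) * fst x $ k),
                         (\<chi> k. \<i> * of_real (circle_weight k) * snd x $ k))"

lemma circle_act_eq: "torus_act (circle_ex s) p = Re s *\<^sub>R p + Im s *\<^sub>R circle_generator p"
  unfolding torus_act_def circle_ex_def circle_generator_def
  by (auto simp: vec_eq_iff prod_eq_iff complex_eq_iff circle_weight_def split: option.splits)

lemma linear_circle_generator: "linear circle_generator"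
  by (rule linearI)
    (simp_all add: circle_generator_def vec_eq_iff prod_eq_iff algebra_simps scaleR_conv_of_real)

lemma inner_circle_generator_self: "p \<bullet> circle_generator p = 0"
  unfolding circle_generator_def
  by (simp add: inner_prod_def inner_vec_def inner_complex_def circle_weight_def algebra_simps)

lemma inner_circle_generator_generator: "circle_generator p \<bullet> circle_generator p = p \<bullet> p"
proof -
  have e: "(\<i> * of_real (circle_weight k) * z) \<bullet> (\<i> * of_real (circle_weight k) * z) = z \<bullet> z"
    for k and z :: complex
    by (cases k) (simp_all add: circle_weight_def inner_complex_def algebra_simps)
  then show ?thesis
    unfolding circle_generator_def inner_prod_def inner_vec_def
    by (simp only: fst_conv snd_conv vec_lambda_beta e)
qed

lemma cmod_mult_self: "cmod a * cmod a = Re a * Re a + Im a * Im a"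
  using cmod_power2[of a] by (simp add: power2_eq_square)

text \<open>Up to constants, \<open>moment_form A\<close> is the \<open>A\<close>-component of the moment map of \<open>N\<close>.\<close>

definition moment_form :: "('n::finite option cpt \<Rightarrow> 'n option cpt) \<Rightarrow> 'n option cpt \<Rightarrow> real" where
  "moment_form A x = gH (A (circle_generator x)) x"

lemma moment_form_opI:
  "moment_form opI x = tail_z2 x + tail_w2 x - ((cmod (head_z x))\<^sup>2 + (cmod (head_w x))\<^sup>2)"
  unfolding moment_form_def gH_eq_sum_Re_Im opI_def circle_generator_def tail_z2_def tail_w2_def
  by (simp add: sum_UNIV_option circle_weight_def power2_eq_square cmod_mult_self algebra_simps
      sum.distrib sum_subtractf sum_negf)

lemma moment_form_opS: "moment_form opS x = 2 * Im (head_z x * cnj (head_w x) - tail_pairing x)"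
  unfolding moment_form_def gH_eq_sum_Re_Im opS_def circle_generator_def tail_pairing_def
  by (simp add: sum_UNIV_option circle_weight_def Im_sum algebra_simps sum.distrib sum_subtractf
      sum_negf sum_distrib_left)

lemma moment_form_opT: "moment_form opT x = - 2 * Re (head_z x * cnj (head_w x) - tail_pairing x)"
  unfolding moment_form_def gH_eq_sum_Re_Im opT_def opI_def opS_def circle_generator_def
    tail_pairing_def
  by (simp add: sum_UNIV_option circle_weight_def Re_sum algebra_simps sum.distrib sum_subtractf
      sum_negf sum_distrib_left)

lemma level_ex_iff_moment_form:
  "p \<in> level_ex lam \<longleftrightarrow> moment_form opI p = - 2 * lam \<and> moment_form opS p = 0 \<and> moment_form opT p = 0"
  unfolding level_ex_def moment_form_opI moment_form_opS moment_form_opT by (auto simp: complex_eq_iff)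

lemma moment_form_sym:
  assumes "A \<in> {opI, opS, opT}"
  shows "gH (A (circle_generator x)) y = gH (A (circle_generator y)) x"
  using assms unfolding gH_eq_sum_Re_Im opT_def opI_def opS_def circle_generator_def
  by (auto intro!: sum.cong simp: circle_weight_def algebra_simps split: option.splits)

lemma has_derivative_moment_form:
  fixes A :: "'n::finite option cpt \<Rightarrow> 'n option cpt"
  assumes A: "A \<in> {opI, opS, opT}" and f: "(f has_derivative f') (at x within s)"
  shows "((\<lambda>t. moment_form A (f t)) has_derivative (\<lambda>h. 2 * gH (A (circle_generator (f x))) (f' h)))
    (at x within s)"
proof -
  have lin: "linear A" using A linear_opI linear_opS linear_opT by auto
  have "bilinear (\<lambda>a b. gH (A (circle_generator a)) b)"
    unfolding bilinear_def
  proof (intro conjI allI)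
    show "linear (\<lambda>b. gH (A (circle_generator a)) b)" for a
      by (rule linearI) (simp_all add: gH_add_right gH_scaleR_right)
    show "linear (\<lambda>a. gH (A (circle_generator a)) b)" for b
      by (rule linearI) (simp_all add: linear_add[OF linear_circle_generator] linear_add[OF lin]
          linear_scale[OF linear_circle_generator] linear_scale[OF lin] gH_add_left gH_scaleR_left)
  qed
  then have "bounded_bilinear (\<lambda>a b. gH (A (circle_generator a)) (b :: 'n option cpt))"
    by (simp add: bilinear_conv_bounded_bilinear)
  from bounded_bilinear.FDERIV[OF this f f] show ?thesis
    unfolding moment_form_def by (simp add: moment_form_sym[OF A, of "f' _" "f x"])
qed

text \<open>On the level set the squared head norms \<open>P\<close>, \<open>Q\<close> and squared tail norms \<open>A\<close>, \<open>B\<close> satisfy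
  \<open>P + Q = 2\<lambda> + A + B\<close> and, by Cauchy-Schwarz, \<open>P Q \<le> A B\<close>; since \<open>\<lambda> > 0\<close> this rules out both
  \<open>P = Q\<close> and \<open>P - Q = B - A\<close>.\<close>

lemma head_norms_differ_real:
  fixes P Q A B lam :: real
  assumes "A \<ge> 0" "B \<ge> 0" "lam > 0" "P + Q = 2 * lam + A + B" "P * Q \<le> A * B"
  shows "P \<noteq> Q"
proof
  assume PQ: "P = Q"
  have "A * B \<le> ((A + B) / 2)\<^sup>2"
    using sum_squares_bound[of A B] by (simp add: power2_eq_square field_simps)
  moreover have "((A + B) / 2)\<^sup>2 < P\<^sup>2"
    using assms PQ by (intro power_strict_mono) auto
  ultimately show False using assms PQ by (simp add: power2_eq_square)
qed

lemma generator_nonnull_real: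
  fixes P Q A B lam :: real
  assumes "A \<ge> 0" "B \<ge> 0" "lam > 0" "P + Q = 2 * lam + A + B" "P * Q \<le> A * B"
  shows "P - Q + A - B \<noteq> 0"
proof
  assume "P - Q + A - B = 0"
  then have "P - Q = B - A" by simp
  have "(P + Q)\<^sup>2 = (P - Q)\<^sup>2 + 4 * (P * Q)"
    by (simp add: power2_eq_square algebra_simps)
  also have "\<dots> \<le> (B - A)\<^sup>2 + 4 * (A * B)"
    using \<open>P - Q = B - A\<close> assms(5) by simp
  also have "\<dots> = (A + B)\<^sup>2"
    by (simp add: power2_eq_square algebra_simps)
  finally have "(P + Q)\<^sup>2 \<le> (A + B)\<^sup>2" .
  moreover have "(A + B)\<^sup>2 < (P + Q)\<^sup>2"
    using assms by (intro power_strict_mono) auto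
  ultimately show False by simp
qed

lemma level_ex_head_norms:
  assumes "p \<in> level_ex lam"
  shows "(cmod (head_z p))\<^sup>2 + (cmod (head_w p))\<^sup>2 = 2 * lam + tail_z2 p + tail_w2 p"
    and "(cmod (head_z p))\<^sup>2 * (cmod (head_w p))\<^sup>2 \<le> tail_z2 p * tail_w2 p"
proof -
  show "(cmod (head_z p))\<^sup>2 + (cmod (head_w p))\<^sup>2 = 2 * lam + tail_z2 p + tail_w2 p"
    using assms by (simp add: level_ex_def)
  have "tail_pairing p = head_z p * cnj (head_w p)" using assms by (simp add: level_ex_def)
  then show "(cmod (head_z p))\<^sup>2 * (cmod (head_w p))\<^sup>2 \<le> tail_z2 p * tail_w2 p"
    using tail_pairing_bound[of p] by (simp add: norm_mult power_mult_distrib)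
qed

lemma level_ex_head_norms_differ:
  assumes "p \<in> level_ex lam" "lam > 0"
  shows "cmod (head_z p) \<noteq> cmod (head_w p)"
  using head_norms_differ_real[OF tail_z2_nonneg tail_w2_nonneg assms(2)
      level_ex_head_norms[OF assms(1)]]
  by auto

lemma level_ex_generator_nonnull:
  assumes "p \<in> level_ex lam" "lam > 0"
  shows "gH (circle_generator p) (circle_generator p) \<noteq> 0"
proof -
  have "gH (circle_generator p) (circle_generator p)
      = (cmod (head_z p))\<^sup>2 - (cmod (head_w p))\<^sup>2 + tail_z2 p - tail_w2 p"
    unfolding gH_eq_sum_Re_Im circle_generator_def tail_z2_def tail_w2_def
    by (simp add: sum_UNIV_option circle_weight_def power2_eq_square cmod_mult_self algebra_simps
        sum.distrib sum_subtractf)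
  then show ?thesis
    using generator_nonnull_real[OF tail_z2_nonneg tail_w2_nonneg assms(2)
        level_ex_head_norms[OF assms(1)]]
    by simp
qed

lemma circle_act_free:
  assumes "p \<in> level_ex lam" "lam > 0" "t \<in> kerN (u_ex :: 'n::finite option \<Rightarrow> 'n \<Rightarrow> int)"
    and fixed: "torus_act t p = p"
  shows "t = (\<lambda>_. 1)"
proof -
  obtain s where s: "t = circle_ex s" using assms(3) kerN_ex by blast
  have "head_z p \<noteq> 0 \<or> head_w p \<noteq> 0"
    using level_ex_head_norms_differ[OF assms(1,2)] by auto
  moreover have "s * head_z p = head_z p" "s * head_w p = head_w p"
    using arg_cong[OF fixed, of "\<lambda>q. head_z q"] arg_cong[OF fixed, of "\<lambda>q. head_w q"]
    by (simp_all add: s)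
  ultimately have "s = 1" by auto
  then show ?thesis by (auto simp: s circle_ex_def fun_eq_iff split: option.splits)
qed

lemma velocity_fixed_by_linear:
  assumes "bounded_linear L" "\<And>t. L (\<gamma> t) = \<gamma> t" "(\<gamma> has_derivative (\<lambda>t. t *\<^sub>R Y)) (at 0)"
  shows "L Y = Y"
proof -
  have "((\<lambda>t. L (\<gamma> t)) has_derivative (\<lambda>t. L (t *\<^sub>R Y))) (at 0)"
    using bounded_linear.has_derivative[OF assms(1,3)] .
  moreover have "((\<lambda>t. L (\<gamma> t)) has_derivative (\<lambda>t. t *\<^sub>R Y)) (at 0)"
    using assms(3) by (simp only: assms(2))
  ultimately have "(\<lambda>t. L (t *\<^sub>R Y)) = (\<lambda>t. t *\<^sub>R Y)"
    by (rule has_derivative_unique)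
  from fun_cong[OF this, of 1] show ?thesis by simp
qed

lemma velocity_orthogonal_of_const_norm:
  assumes "\<And>t. \<gamma> t \<bullet> \<gamma> t = c" "(\<gamma> has_derivative (\<lambda>t. t *\<^sub>R Y)) (at 0)"
  shows "\<gamma> 0 \<bullet> Y = 0"
proof -
  have "((\<lambda>t. \<gamma> t \<bullet> \<gamma> t) has_derivative (\<lambda>h. \<gamma> 0 \<bullet> (h *\<^sub>R Y) + (h *\<^sub>R Y) \<bullet> \<gamma> 0)) (at 0)"
    by (rule has_derivative_inner[OF assms(2,2)])
  moreover have "((\<lambda>t. \<gamma> t \<bullet> \<gamma> t) has_derivative (\<lambda>h. 0)) (at 0)"
    by (simp only: assms(1) has_derivative_const)
  ultimately have "(\<lambda>h. \<gamma> 0 \<bullet> (h *\<^sub>R Y) + (h *\<^sub>R Y) \<bullet> \<gamma> 0) = (\<lambda>h. 0)"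
    by (rule has_derivative_unique)
  from fun_cong[OF this, of 1] show ?thesis by (simp add: inner_commute)
qed

lemma orbit_ex_in_plane:
  fixes p :: "'n::finite option cpt"
  assumes "q \<in> orbit (kerN u_ex) p" "p \<noteq> 0"
  defines "J \<equiv> circle_generator p"
  shows "(q \<bullet> p / (p \<bullet> p)) *\<^sub>R p + (q \<bullet> J / (p \<bullet> p)) *\<^sub>R J = q"
    and "q \<bullet> q = p \<bullet> p"
proof -
  obtain s where s: "cmod s = 1" "q = Re s *\<^sub>R p + Im s *\<^sub>R J"
    using assms unfolding orbit_ex circle_act_eq J_def by blast
  have "p \<bullet> J = 0" "J \<bullet> p = 0" "J \<bullet> J = p \<bullet> p"
    unfolding J_def using inner_circle_generator_self[of p] inner_circle_generator_generator[of p]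
    by (simp_all add: inner_commute)
  then show "(q \<bullet> p / (p \<bullet> p)) *\<^sub>R p + (q \<bullet> J / (p \<bullet> p)) *\<^sub>R J = q"
    using assms(2) unfolding s(2) by (simp add: inner_add_left)
  have "(Re s)\<^sup>2 + (Im s)\<^sup>2 = 1"
    using s(1) by (simp add: cmod_power2[symmetric])
  moreover have "q \<bullet> q = ((Re s)\<^sup>2 + (Im s)\<^sup>2) * (p \<bullet> p)"
    using \<open>p \<bullet> J = 0\<close> \<open>J \<bullet> p = 0\<close> \<open>J \<bullet> J = p \<bullet> p\<close> unfolding s(2)
    by (simp add: inner_add_left inner_add_right inner_commute power2_eq_square algebra_simps)
  ultimately show "q \<bullet> q = p \<bullet> p" by simp
qed

lemma orbit_tangent_ex:
  assumes "p \<noteq> 0"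
  shows "tangent_space (orbit (kerN (u_ex :: 'n::finite option \<Rightarrow> 'n \<Rightarrow> int)) p) p
    = range (\<lambda>a. a *\<^sub>R circle_generator p)"
proof (intro set_eqI iffI)
  fix Y assume "Y \<in> range (\<lambda>a. a *\<^sub>R circle_generator p)"
  then obtain a where Y: "Y = a *\<^sub>R circle_generator p" by blast
  define \<gamma> where "\<gamma> = (\<lambda>t. torus_act (circle_ex (cis (a * t))) p)"
  have "(\<gamma> has_vector_derivative Y) (at 0)"
    unfolding \<gamma>_def circle_act_eq Y
    by (auto intro!: derivative_eq_intros simp: has_vector_derivative_def)
  moreover have "\<gamma> t \<in> orbit (kerN u_ex) p" for t
    unfolding \<gamma>_def orbit_ex by auto
  moreover have "\<gamma> 0 = p"
    unfolding \<gamma>_def circle_act_eq by simp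
  ultimately show "Y \<in> tangent_space (orbit (kerN u_ex) p) p"
    unfolding tangent_space_def by blast
next
  fix Y assume "Y \<in> tangent_space (orbit (kerN (u_ex :: 'n option \<Rightarrow> 'n \<Rightarrow> int)) p) p"
  then obtain \<gamma> where \<gamma>: "\<gamma> 0 = p" "\<And>t. \<gamma> t \<in> orbit (kerN u_ex) p"
    and d: "(\<gamma> has_derivative (\<lambda>t. t *\<^sub>R Y)) (at 0)"
    unfolding tangent_space_def has_vector_derivative_def by blast
  let ?n = "p \<bullet> p" and ?J = "circle_generator p"
  define L where "L x = (x \<bullet> p / ?n) *\<^sub>R p + (x \<bullet> ?J / ?n) *\<^sub>R ?J" for x
  have "bounded_linear L"
    unfolding L_def[abs_def]
    by (intro bounded_linear_intros bounded_linear_divide[THEN bounded_linear_compose]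
        bounded_linear_inner_left)
  then have "L Y = Y"
    using velocity_fixed_by_linear d orbit_ex_in_plane(1)[OF \<gamma>(2) assms] unfolding L_def by blast
  moreover have "p \<bullet> Y = 0"
    using velocity_orthogonal_of_const_norm[OF orbit_ex_in_plane(2)[OF \<gamma>(2) assms] d] \<gamma>(1) by simp
  ultimately have "Y = (Y \<bullet> ?J / ?n) *\<^sub>R ?J"
    unfolding L_def by (simp add: inner_commute)
  then show "Y \<in> range (\<lambda>a. a *\<^sub>R circle_generator p)" by blast
qed

section \<open>The quotient map\<close>

definition larger_root :: "real \<Rightarrow> real \<Rightarrow> real" where
  "larger_root R C = (R + sqrt (R\<^sup>2 - 4 * C)) / 2"

lemma larger_root_props:
  assumes "C \<ge> 0" "R > 0" "R\<^sup>2 - 4 * C > 0"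
  shows "larger_root R C > 0" "(larger_root R C)\<^sup>2 + C = R * larger_root R C" "C < (larger_root R C)\<^sup>2"
proof -
  let ?s = "sqrt (R\<^sup>2 - 4 * C)"
  have s: "?s\<^sup>2 = R\<^sup>2 - 4 * C" "?s > 0" using assms by simp_all
  then have "R + ?s > 0" using assms(2) by linarith
  then show pos: "larger_root R C > 0" by (simp add: larger_root_def)
  show "(larger_root R C)\<^sup>2 + C = R * larger_root R C"
    using s by (simp add: larger_root_def power2_eq_square field_simps)
  have "(larger_root R C)\<^sup>2 - C = larger_root R C * ?s"
    using s by (simp add: larger_root_def power2_eq_square field_simps)
  then show "C < (larger_root R C)\<^sup>2" using pos s(2) by (smt (verit) mult_pos_pos)
qed

lemma larger_root_eq:
  assumes "P > Q" "Q \<ge> 0"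
  shows "larger_root (P + Q) (P * Q) = P"
proof -
  have "(P + Q)\<^sup>2 - 4 * (P * Q) = (P - Q)\<^sup>2" by (simp add: power2_eq_square algebra_simps)
  then show ?thesis using assms by (simp add: larger_root_def)
qed

text \<open>The quotient is parametrised by two copies of \<open>\<real>\<^sup>4\<^sup>n\<close>: the coordinates \<open>(j, 1), \<dots>, (j, 4)\<close>
  of \<open>x\<close> are the real and imaginary parts of the tail coordinates \<open>z\<^sub>j\<close>, \<open>w\<^sub>j\<close>.\<close>

definition coord_z :: "real^('n::finite \<times> 4) \<Rightarrow> 'n \<Rightarrow> complex" where
  "coord_z x j = Complex (x $ (j, 1)) (x $ (j, 2))"

definition coord_w :: "real^('n::finite \<times> 4) \<Rightarrow> 'n \<Rightarrow> complex" where
  "coord_w x j = Complex (x $ (j, 3)) (x $ (j, 4))"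

definition tail_point :: "real^('n::finite \<times> 4) \<Rightarrow> 'n option cpt" where
  "tail_point x = ((\<chi> k. case k of None \<Rightarrow> 0 | Some j \<Rightarrow> coord_z x j),
                   (\<chi> k. case k of None \<Rightarrow> 0 | Some j \<Rightarrow> coord_w x j))"

definition section_radius :: "real \<Rightarrow> real^('n::finite \<times> 4) \<Rightarrow> real" where
  "section_radius lam x = sqrt (larger_root (2 * lam + tail_z2 (tail_point x) + tail_w2 (tail_point x))
                                            ((cmod (tail_pairing (tail_point x)))\<^sup>2))"

text \<open>The point over \<open>x\<close> in component \<open>b\<close> whose larger head coordinate is real and positive.
  Its square \<open>\<rho>\<close> solves \<open>\<rho> + |c|\<^sup>2 / \<rho> = 2\<lambda> + |z'|\<^sup>2 + |w'|\<^sup>2\<close>, where \<open>c\<close> is the tail pairing.\<close>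

definition section_ex :: "real \<Rightarrow> bool \<Rightarrow> real^('n::finite \<times> 4) \<Rightarrow> 'n option cpt" where
  "section_ex lam b x =
    ((\<chi> k. case k of
        None \<Rightarrow> if b then of_real (section_radius lam x)
                else tail_pairing (tail_point x) / of_real (section_radius lam x)
      | Some j \<Rightarrow> coord_z x j),
     (\<chi> k. case k of
        None \<Rightarrow> if b then cnj (tail_pairing (tail_point x)) / of_real (section_radius lam x)
                else of_real (section_radius lam x)
      | Some j \<Rightarrow> coord_w x j))"

definition component_ex :: "'n::finite option cpt \<Rightarrow> bool" where
  "component_ex p \<longleftrightarrow> cmod (head_w p) < cmod (head_z p)"

text \<open>Acting by \<open>cnj (gauge_phase p)\<close> turns the larger head coordinate of \<open>p\<close> real and positive and
  multiplies the tail by \<open>gauge_phase p\<close>; the quotient coordinates record that rotated tail.\<close>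

definition gauge_phase :: "'n::finite option cpt \<Rightarrow> complex" where
  "gauge_phase p = (if component_ex p then head_z p / of_real (cmod (head_z p))
                    else head_w p / of_real (cmod (head_w p)))"

definition quotient_coords :: "'n::finite option cpt \<Rightarrow> real^('n \<times> 4)" where
  "quotient_coords p = (\<chi> i. case i of (j, m) \<Rightarrow>
      if m = 1 then Re (gauge_phase p * fst p $ Some j)
      else if m = 2 then Im (gauge_phase p * fst p $ Some j)
      else if m = 3 then Re (gauge_phase p * snd p $ Some j)
      else Im (gauge_phase p * snd p $ Some j))"

lemma section_ex_nth [simp]:
  "fst (section_ex lam b x) $ Some j = coord_z x j"
  "snd (section_ex lam b x) $ Some j = coord_w x j"
  "head_z (section_ex lam b x) = (if b then of_real (section_radius lam x)
      else tail_pairing (tail_point x) / of_real (section_radius lam x))"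
  "head_w (section_ex lam b x) =
    (if b then cnj (tail_pairing (tail_point x)) / of_real (section_radius lam x)
     else of_real (section_radius lam x))"
  by (simp_all add: section_ex_def)

lemma section_ex_tail [simp]:
  "tail_z2 (section_ex lam b x) = tail_z2 (tail_point x)"
  "tail_w2 (section_ex lam b x) = tail_w2 (tail_point x)"
  "tail_pairing (section_ex lam b x) = tail_pairing (tail_point x)"
  by (simp_all add: tail_z2_def tail_w2_def tail_pairing_def tail_point_def)

lemma section_discriminant_pos:
  assumes "lam > 0"
  shows "(2 * lam + tail_z2 q + tail_w2 q)\<^sup>2 - 4 * (cmod (tail_pairing q))\<^sup>2 > 0"
proof -
  have "4 * (cmod (tail_pairing q))\<^sup>2 \<le> (tail_z2 q + tail_w2 q)\<^sup>2"
    using tail_pairing_bound[of q] sum_squares_bound[of "tail_z2 q" "tail_w2 q"]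
    by (simp add: power2_eq_square algebra_simps)
  moreover have "(tail_z2 q + tail_w2 q)\<^sup>2 < (2 * lam + tail_z2 q + tail_w2 q)\<^sup>2"
    using assms tail_z2_nonneg[of q] tail_w2_nonneg[of q] by (intro power_strict_mono) auto
  ultimately show ?thesis by simp
qed

lemma section_radius_props:
  fixes x :: "real^('n::finite \<times> 4)"
  assumes "lam > 0"
  defines "R \<equiv> 2 * lam + tail_z2 (tail_point x) + tail_w2 (tail_point x)"
    and "C \<equiv> (cmod (tail_pairing (tail_point x)))\<^sup>2"
  shows "section_radius lam x > 0"
    and "(section_radius lam x)\<^sup>2 + C / (section_radius lam x)\<^sup>2 = R"
    and "cmod (tail_pairing (tail_point x)) < (section_radius lam x)\<^sup>2"
proof -
  have R: "R > 0" "C \<ge> 0"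
    using assms(1) tail_z2_nonneg[of "tail_point x"] tail_w2_nonneg[of "tail_point x"]
    by (simp_all add: R_def C_def)
  have D: "R\<^sup>2 - 4 * C > 0"
    using section_discriminant_pos[OF assms(1)] by (simp add: R_def C_def)
  note root = larger_root_props[OF R(2) R(1) D]
  have sq: "(section_radius lam x)\<^sup>2 = larger_root R C"
    using root(1) by (simp add: section_radius_def R_def C_def)
  show "section_radius lam x > 0"
    using root(1) by (simp add: section_radius_def R_def C_def)
  show "(section_radius lam x)\<^sup>2 + C / (section_radius lam x)\<^sup>2 = R"
    unfolding sq using root(1,2) by (simp add: field_simps power2_eq_square)
  have "(cmod (tail_pairing (tail_point x)))\<^sup>2 < (larger_root R C)\<^sup>2"
    using root(3) by (simp add: C_def)
  then have "cmod (tail_pairing (tail_point x)) < larger_root R C"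
    by (rule power2_less_imp_less) (use root(1) in simp)
  then show "cmod (tail_pairing (tail_point x)) < (section_radius lam x)\<^sup>2"
    unfolding sq .
qed

lemma section_in_level_ex:
  assumes "lam > 0"
  shows "section_ex lam b x \<in> level_ex lam"
proof -
  let ?r = "section_radius lam x" and ?c = "tail_pairing (tail_point x)"
  have r: "?r > 0"
    "?r\<^sup>2 + (cmod ?c)\<^sup>2 / ?r\<^sup>2 = 2 * lam + tail_z2 (tail_point x) + tail_w2 (tail_point x)"
    using section_radius_props[OF assms] by auto
  then show ?thesis
    by (cases b) (auto simp: level_ex_def norm_divide power_divide field_simps)
qed

lemma component_section:
  assumes "lam > 0"
  shows "component_ex (section_ex lam b x) = b"
proof -
  let ?r = "section_radius lam x"
  have "?r > 0" "cmod (tail_pairing (tail_point x)) < ?r\<^sup>2"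
    using section_radius_props[OF assms] by auto
  then have "cmod (tail_pairing (tail_point x)) / ?r < ?r"
    by (simp add: field_simps power2_eq_square)
  then show ?thesis
    using \<open>?r > 0\<close> by (cases b) (auto simp: component_ex_def norm_divide abs_of_pos)
qed

lemma quotient_coords_section:
  assumes "lam > 0"
  shows "quotient_coords (section_ex lam b x) = x"
proof -
  have "gauge_phase (section_ex lam b x) = 1"
    using section_radius_props(1)[OF assms, of x] component_section[OF assms, of b x]
    by (cases b) (auto simp: gauge_phase_def abs_of_pos)
  moreover have "m = 1 \<or> m = 2 \<or> m = 3 \<or> m = 4" for m :: 4
    by (rule exhaust_4)
  ultimately show ?thesis
    by (auto simp: vec_eq_iff quotient_coords_def coord_z_def coord_w_def)
qed

lemma quotient_coords_onto:
  assumes "lam > 0"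
  shows "\<exists>p\<in>level_ex lam. component_ex p = b \<and> quotient_coords p = x"
  using section_in_level_ex[OF assms] component_section[OF assms] quotient_coords_section[OF assms]
  by blast

lemma gauge_phase_unit:
  assumes "p \<in> level_ex lam" "lam > 0"
  shows "cmod (gauge_phase p) = 1"
  using level_ex_head_norms_differ[OF assms]
  by (cases "component_ex p") (auto simp: gauge_phase_def component_ex_def norm_divide)

lemma circle_act_component: "cmod s = 1 \<Longrightarrow> component_ex (torus_act (circle_ex s) p) = component_ex p"
  by (simp add: component_ex_def norm_mult)

lemma circle_act_gauge_phase: "cmod s = 1 \<Longrightarrow> gauge_phase (torus_act (circle_ex s) p) = s * gauge_phase p"
  by (simp add: gauge_phase_def circle_act_component norm_mult)

lemma circle_act_quotient_coords:
  assumes "cmod s = 1"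
  shows "quotient_coords (torus_act (circle_ex s) p) = quotient_coords p"
proof -
  have rot: "s * u * (cnj s * a) = u * a" for u a
    using unit_mult_cnj[OF assms] by (simp add: algebra_simps)
  show ?thesis
    unfolding quotient_coords_def circle_act_gauge_phase[OF assms] circle_act_nth rot ..
qed

lemma phase_mult_cnj_divide:
  fixes z w :: complex
  assumes "z \<noteq> 0"
  shows "z / of_real (cmod z) * (cnj z * w / of_real (cmod z)) = w"
proof -
  have "z * cnj z = of_real ((cmod z)\<^sup>2)" by (rule complex_norm_square[symmetric])
  then show ?thesis using assms by (simp add: field_simps power2_eq_square)
qed

lemma quotient_coords_tail [simp]:
  "coord_z (quotient_coords p) j = gauge_phase p * fst p $ Some j"
  "coord_w (quotient_coords p) j = gauge_phase p * snd p $ Some j"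
  by (simp_all add: coord_z_def coord_w_def quotient_coords_def complex_eq_iff)

lemma tail_point_quotient_coords:
  assumes "cmod (gauge_phase p) = 1"
  shows "tail_z2 (tail_point (quotient_coords p)) = tail_z2 p"
    and "tail_w2 (tail_point (quotient_coords p)) = tail_w2 p"
    and "tail_pairing (tail_point (quotient_coords p)) = tail_pairing p"
proof -
  have rot: "gauge_phase p * a * cnj (gauge_phase p * b) = a * cnj b" for a b
    using unit_mult_cnj[OF assms] by (simp add: algebra_simps)
  show "tail_pairing (tail_point (quotient_coords p)) = tail_pairing p"
    unfolding tail_pairing_def tail_point_def
    by (simp only: fst_conv snd_conv vec_lambda_beta option.case quotient_coords_tail rot)
qed (use assms in \<open>simp_all add: tail_z2_def tail_w2_def tail_point_def norm_mult\<close>)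

lemma section_radius_quotient_coords:
  assumes "p \<in> level_ex lam" "lam > 0"
  shows "section_radius lam (quotient_coords p)
    = (if component_ex p then cmod (head_z p) else cmod (head_w p))"
proof -
  let ?P = "(cmod (head_z p))\<^sup>2" and ?Q = "(cmod (head_w p))\<^sup>2"
  note tails = tail_point_quotient_coords[OF gauge_phase_unit[OF assms]]
  have "tail_pairing p = head_z p * cnj (head_w p)"
    using assms(1) by (simp add: level_ex_def)
  then have "(cmod (tail_pairing p))\<^sup>2 = ?P * ?Q"
    by (simp add: norm_mult power_mult_distrib)
  then have "section_radius lam (quotient_coords p) = sqrt (larger_root (?P + ?Q) (?P * ?Q))"
    using level_ex_head_norms(1)[OF assms(1)] by (simp add: section_radius_def tails)
  moreover have "larger_root (?P + ?Q) (?P * ?Q) = (if component_ex p then ?P else ?Q)"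
    using level_ex_head_norms_differ[OF assms] larger_root_eq[of ?P ?Q] larger_root_eq[of ?Q ?P]
    by (auto simp: component_ex_def power_strict_mono algebra_simps)
  ultimately show ?thesis by simp
qed

lemma level_ex_eq_act_section:
  assumes "p \<in> level_ex lam" "lam > 0"
  shows "p = torus_act (circle_ex (gauge_phase p))
    (section_ex lam (component_ex p) (quotient_coords p))"
proof -
  let ?u = "gauge_phase p"
  have u: "cmod ?u = 1" by (rule gauge_phase_unit[OF assms])
  have pairing: "tail_pairing p = head_z p * cnj (head_w p)"
    using assms(1) by (simp add: level_ex_def)
  let ?r = "section_radius lam (quotient_coords p)"
  have r: "?r = (if component_ex p then cmod (head_z p) else cmod (head_w p))"
    by (rule section_radius_quotient_coords[OF assms])
  have pairing: "tail_pairing (tail_point (quotient_coords p)) = head_z p * cnj (head_w p)"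
    using assms(1) tail_point_quotient_coords(3)[OF u] by (simp add: level_ex_def)
  have head: "head_z p = ?u * head_z (section_ex lam (component_ex p) (quotient_coords p))
    \<and> head_w p = ?u * head_w (section_ex lam (component_ex p) (quotient_coords p))"
  proof (cases "component_ex p")
    case True
    then have "head_z p \<noteq> 0" by (auto simp: component_ex_def)
    then show ?thesis
      using True phase_mult_cnj_divide[of "head_z p" "head_w p"]
      by (simp add: r pairing gauge_phase_def)
  next
    case False
    then have "head_w p \<noteq> 0"
      using level_ex_head_norms_differ[OF assms] by (auto simp: component_ex_def)
    then show ?thesis
      using False phase_mult_cnj_divide[of "head_w p" "head_z p"]
      by (simp add: r pairing gauge_phase_def mult.commute)
  qed
  have "cnj ?u * (?u * a) = a" for a
    using unit_mult_cnj[OF u] by (simp add: algebra_simps)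
  then show ?thesis
    using head by (auto simp: prod_eq_iff vec_eq_iff torus_act_def circle_ex_def
        tail_point_quotient_coords[OF u] split: option.splits)
qed

lemma quotient_fibre:
  assumes "p \<in> level_ex lam" "p' \<in> level_ex lam" "lam > 0"
  shows "(component_ex p' = component_ex p \<and> quotient_coords p' = quotient_coords p)
    \<longleftrightarrow> p' \<in> orbit (kerN (u_ex :: 'n::finite option \<Rightarrow> 'n \<Rightarrow> int)) p"
proof
  assume "p' \<in> orbit (kerN u_ex) p"
  then obtain s where "cmod s = 1" "p' = torus_act (circle_ex s) p" unfolding orbit_ex by blast
  then show "component_ex p' = component_ex p \<and> quotient_coords p' = quotient_coords p"
    by (simp add: circle_act_component circle_act_quotient_coords)
next
  assume same: "component_ex p' = component_ex p \<and> quotient_coords p' = quotient_coords p"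
  let ?S = "section_ex lam (component_ex p) (quotient_coords p)"
  let ?s = "gauge_phase p' * cnj (gauge_phase p)"
  have u: "cmod (gauge_phase p) = 1" "cmod (gauge_phase p') = 1"
    using gauge_phase_unit assms by blast+
  have "torus_act (circle_ex ?s) p = torus_act (circle_ex (?s * gauge_phase p)) ?S"
    using level_ex_eq_act_section[OF assms(1,3)] by (metis circle_act_mult)
  also have "?s * gauge_phase p = gauge_phase p'"
    using unit_mult_cnj[OF u(1)] by (simp add: mult.commute mult.left_commute)
  also have "torus_act (circle_ex (gauge_phase p')) ?S = p'"
    using level_ex_eq_act_section[OF assms(2,3)] same by simp
  finally have "p' = torus_act (circle_ex ?s) p \<and> cmod ?s = 1"
    using u by (simp add: norm_mult)
  then show "p' \<in> orbit (kerN u_ex) p"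
    unfolding orbit_ex by blast
qed

lemma sigma_level_ex:
  assumes "p \<in> level_ex lam"
  shows "sigma p \<in> level_ex lam"
proof -
  have "tail_z2 (sigma p) = tail_w2 p" "tail_w2 (sigma p) = tail_z2 p"
    "tail_pairing (sigma p) = tail_pairing p"
    by (simp_all add: tail_z2_def tail_w2_def tail_pairing_def sigma_def mult.commute)
  then show ?thesis
    using assms by (simp add: level_ex_def sigma_def mult.commute add.commute)
qed

lemma component_sigma:
  assumes "p \<in> level_ex lam" "lam > 0"
  shows "component_ex (sigma p) = (\<not> component_ex p)"
  using level_ex_head_norms_differ[OF assms] by (auto simp: component_ex_def sigma_def)

lemma csmooth_expr_coord_z: "csmooth_expr U (\<lambda>x. coord_z x j)"
  unfolding coord_z_def by (intro csmooth_expr_Complex smooth_expr.linear bounded_linear_vec_nth)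

lemma csmooth_expr_coord_w: "csmooth_expr U (\<lambda>x. coord_w x j)"
  unfolding coord_w_def by (intro csmooth_expr_Complex smooth_expr.linear bounded_linear_vec_nth)

lemma tail_of_tail_point:
  "tail_z2 (tail_point x) = (\<Sum>j\<in>UNIV. (cmod (coord_z x j))\<^sup>2)"
  "tail_w2 (tail_point x) = (\<Sum>j\<in>UNIV. (cmod (coord_w x j))\<^sup>2)"
  "tail_pairing (tail_point x) = (\<Sum>j\<in>UNIV. coord_z x j * cnj (coord_w x j))"
  by (simp_all add: tail_z2_def tail_w2_def tail_pairing_def tail_point_def)

lemma csmooth_expr_tail_pairing_tail_point: "csmooth_expr U (\<lambda>x. tail_pairing (tail_point x))"
  unfolding tail_of_tail_point
  by (intro csmooth_expr_sum csmooth_expr_mult csmooth_expr_cnj csmooth_expr_coord_z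
      csmooth_expr_coord_w) auto

lemma smooth_expr_section_radius:
  assumes "lam > 0"
  shows "smooth_expr U (section_radius lam :: real^('n::finite \<times> 4) \<Rightarrow> real)"
proof -
  let ?R = "\<lambda>x::real^('n \<times> 4). 2 * lam + tail_z2 (tail_point x) + tail_w2 (tail_point x)"
  let ?C = "\<lambda>x::real^('n \<times> 4). (cmod (tail_pairing (tail_point x)))\<^sup>2"
  have R: "smooth_expr U ?R"
    unfolding tail_of_tail_point
    by (intro smooth_expr.add smooth_expr.const smooth_expr_sum smooth_expr_cmod_power2
        csmooth_expr_coord_z csmooth_expr_coord_w) auto
  have C: "smooth_expr U ?C"
    by (intro smooth_expr_cmod_power2 csmooth_expr_tail_pairing_tail_point)
  have D: "smooth_expr U (\<lambda>x. (?R x)\<^sup>2 - 4 * ?C x)"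
    by (intro smooth_expr_diff smooth_expr_power2 R smooth_expr_cmult C)
  have "\<forall>x\<in>U. (?R x)\<^sup>2 - 4 * ?C x > 0"
    using section_discriminant_pos[OF assms] by blast
  then have "smooth_expr U (\<lambda>x. (?R x + sqrt ((?R x)\<^sup>2 - 4 * ?C x)) / 2)"
    by (intro smooth_expr_divide smooth_expr.add R smooth_expr_sqrt[OF D] smooth_expr.const) auto
  then show ?thesis
    unfolding section_radius_def[abs_def] larger_root_def
    by (rule smooth_expr_sqrt)
      (use section_radius_props(1)[OF assms] in \<open>auto simp: section_radius_def larger_root_def\<close>)
qed

lemma csmooth_expr_case_option:
  "csmooth_expr U A \<Longrightarrow> (\<And>j. csmooth_expr U (B j))
    \<Longrightarrow> csmooth_expr U (\<lambda>x. case k of None \<Rightarrow> A x | Some j \<Rightarrow> B j x)"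
  by (cases k) auto

lemma smooth_on_section:
  assumes "lam > 0"
  shows "smooth_on UNIV (section_ex lam b)"
proof -
  have r: "smooth_expr UNIV (section_radius lam)" and pos: "\<forall>x\<in>UNIV. section_radius lam x > 0"
    using smooth_expr_section_radius[OF assms] section_radius_props(1)[OF assms] by auto
  have "csmooth_expr UNIV (\<lambda>x. head_z (section_ex lam b x))"
    "csmooth_expr UNIV (\<lambda>x. head_w (section_ex lam b x))"
    using csmooth_expr_of_real[OF r]
      csmooth_expr_divide_real[OF csmooth_expr_tail_pairing_tail_point r pos]
      csmooth_expr_divide_real[OF csmooth_expr_cnj[OF csmooth_expr_tail_pairing_tail_point] r pos]
    by (cases b; simp)+
  then show ?thesis
    by (intro smooth_expr_imp_smooth_on_componentwise smooth_expr_cpt_components open_UNIV)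
      (auto simp: section_ex_def
        intro: csmooth_expr_case_option csmooth_expr_coord_z csmooth_expr_coord_w)
qed

definition component_region :: "bool \<Rightarrow> 'n::finite option cpt set" where
  "component_region b =
    {x. if b then cmod (head_w x) < cmod (head_z x) else cmod (head_z x) < cmod (head_w x)}"

lemma open_component_region: "open (component_region b)"
  unfolding component_region_def
  by (cases b) (simp_all add: open_Collect_less continuous_intros)

lemma level_ex_in_component_region:
  "p \<in> level_ex lam \<Longrightarrow> lam > 0 \<Longrightarrow> p \<in> component_region (component_ex p)"
  using level_ex_head_norms_differ[of p lam] by (auto simp: component_region_def component_ex_def)

lemma component_region_component: "x \<in> component_region b \<Longrightarrow> component_ex x = b"
  by (cases b) (auto simp: component_region_def component_ex_def)

lemma smooth_on_quotient_coords:
  "smooth_on (component_region b) (quotient_coords :: 'n::finite option cpt \<Rightarrow> real^('n \<times> 4))"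
proof -
  define c where "c x = (if b then head_z x else head_w x)" for x :: "'n::finite option cpt"
  have c: "csmooth_expr (component_region b) c"
    unfolding c_def by (cases b) (simp_all add: csmooth_expr_fst_nth csmooth_expr_snd_nth)
  have c_nonzero: "\<forall>x\<in>component_region b. c x \<noteq> 0"
    unfolding c_def component_region_def by (cases b) auto
  have phase: "csmooth_expr (component_region b) (\<lambda>x. c x / of_real (cmod (c x)))"
    by (rule csmooth_expr_divide_real[OF c smooth_expr_cmod[OF c c_nonzero]]) (use c_nonzero in auto)
  have gauge: "\<forall>x\<in>component_region b. gauge_phase x = c x / of_real (cmod (c x))"
    using component_region_component by (auto simp: gauge_phase_def c_def)
  have "smooth_expr (component_region b) (\<lambda>x::'n option cpt. quotient_coords x $ i)" for i
  proof -
    obtain j m where i: "i = (j, m)" by (cases i)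
    let ?z = "\<lambda>x. c x / of_real (cmod (c x)) * fst x $ Some j"
    let ?w = "\<lambda>x. c x / of_real (cmod (c x)) * snd x $ Some j"
    have z: "csmooth_expr (component_region b) ?z" and w: "csmooth_expr (component_region b) ?w"
      by (intro csmooth_expr_mult phase csmooth_expr_fst_nth csmooth_expr_snd_nth)+
    have "smooth_expr (component_region b) (\<lambda>x. if m = 1 then Re (?z x) else if m = 2 then Im (?z x)
        else if m = 3 then Re (?w x) else Im (?w x))"
      using smooth_expr_Re[OF z] smooth_expr_Im[OF z] smooth_expr_Re[OF w] smooth_expr_Im[OF w]
      by (cases "m = 1"; cases "m = 2"; cases "m = 3") simp_all
    then show ?thesis
      unfolding i by (rule smooth_expr.cong) (use gauge in \<open>simp add: quotient_coords_def\<close>)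
  qed
  then show ?thesis
    by (intro smooth_expr_imp_smooth_on_componentwise open_component_region)
      (auto simp: Basis_vec_def inner_axis)
qed

lemma component_ex_locally_constant:
  assumes "lam > 0"
  shows "\<forall>p\<in>level_ex lam. \<exists>U. open U \<and> p \<in> U \<and> (\<forall>x\<in>U \<inter> level_ex lam. component_ex x = component_ex p)"
  using level_ex_in_component_region[OF _ assms] open_component_region component_region_component
  by blast

lemma smooth_on_set_quotient_coords:
  assumes "lam > 0"
  shows "smooth_on_set (level_ex lam) (quotient_coords :: 'n::finite option cpt \<Rightarrow> real^('n \<times> 4))"
  unfolding smooth_on_set_def
  using level_ex_in_component_region[OF _ assms] open_component_region smooth_on_quotient_coords
  by blast

section \<open>Charts and tangent spaces of the level set\<close>

definition flat_chart ::
  "'a::euclidean_space set \<Rightarrow> 'a set \<Rightarrow> 'a set \<Rightarrow> ('a \<Rightarrow> 'a) \<Rightarrow> ('a \<Rightarrow> 'a) \<Rightarrow> 'a set \<Rightarrow> bool" where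
  "flat_chart Z U V \<phi> \<psi> L \<longleftrightarrow> open U \<and> open V
     \<and> (\<forall>x\<in>U. \<phi> x \<in> V \<and> \<psi> (\<phi> x) = x) \<and> (\<forall>y\<in>V. \<psi> y \<in> U \<and> \<phi> (\<psi> y) = y)
     \<and> (\<forall>b\<in>Basis. smooth_expr U (\<lambda>x. \<phi> x \<bullet> b)) \<and> (\<forall>b\<in>Basis. smooth_expr V (\<lambda>y. \<psi> y \<bullet> b))
     \<and> subspace L \<and> (\<forall>x\<in>U. \<phi> x \<in> L \<longleftrightarrow> x \<in> Z)"

lemma embedded_submanifold_if_flat_charts:
  assumes "\<And>p. p \<in> Z \<Longrightarrow> \<exists>U V \<phi> \<psi> L. p \<in> U \<and> flat_chart Z U V \<phi> \<psi> L \<and> dim L = k"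
  shows "embedded_submanifold k (Z :: 'a::euclidean_space set)"
  unfolding embedded_submanifold_def
proof
  fix p assume "p \<in> Z"
  then obtain U V \<phi> \<psi> L where chart: "p \<in> U" "flat_chart Z U V \<phi> \<psi> L" "dim L = k"
    using assms by blast
  then have im: "\<phi> ` U = V"
    unfolding flat_chart_def by (auto intro: rev_image_eqI)
  show "\<exists>U (\<phi>::'a \<Rightarrow> 'a) \<psi> L.
      open U \<and> p \<in> U \<and> open (\<phi> ` U) \<and> smooth_on U \<phi> \<and> smooth_on (\<phi> ` U) \<psi>
      \<and> (\<forall>x\<in>U. \<psi> (\<phi> x) = x) \<and> subspace L \<and> dim L = k \<and> \<phi> ` (Z \<inter> U) = \<phi> ` U \<inter> L"
  proof (intro exI conjI)
    show "open U" "p \<in> U" "open (\<phi> ` U)" "\<forall>x\<in>U. \<psi> (\<phi> x) = x" "subspace L" "dim L = k"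
      using chart im unfolding flat_chart_def by auto
    show "smooth_on U \<phi>" "smooth_on (\<phi> ` U) \<psi>"
      using chart(2) unfolding im flat_chart_def
      by (auto intro: smooth_expr_imp_smooth_on_componentwise)
    show "\<phi> ` (Z \<inter> U) = \<phi> ` U \<inter> L"
      using chart(2) unfolding flat_chart_def by auto
  qed
qed

lemma bounded_linear_opS: "bounded_linear (opS :: 'd::finite cpt \<Rightarrow> _)"
  using linear_opS linear_conv_bounded_linear by blast

lemma flat_chart_compose_opS:
  assumes "flat_chart Z U V \<phi> \<psi> L" and Z: "\<And>z. z \<in> Z \<longleftrightarrow> opS z \<in> Z"
  shows "flat_chart Z (opS -` U) V (\<lambda>x. \<phi> (opS x)) (\<lambda>y. opS (\<psi> y)) (L :: 'd::finite cpt set)"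
proof -
  have "open (opS -` U)"
    using assms(1) bounded_linear_opS
    by (auto simp: flat_chart_def intro: continuous_open_vimage linear_continuous_at)
  moreover have "\<forall>b\<in>Basis. smooth_expr (opS -` U) (\<lambda>x. \<phi> (opS x) \<bullet> b)"
    using assms(1) smooth_expr_compose_linear[OF _ bounded_linear_opS] unfolding flat_chart_def by blast
  moreover have "opS y \<bullet> b = y \<bullet> opS b" for y b :: "'d cpt"
    by (simp add: opS_def inner_prod_def add.commute)
  moreover have "opS b \<in> Basis" if "b \<in> Basis" for b :: "'d cpt"
    using that by (auto simp: opS_def Basis_prod_def)
  ultimately show ?thesis
    using assms unfolding flat_chart_def by auto
qed

definition normal_basis_ex :: "'n::finite option cpt set" where
  "normal_basis_ex = {(axis None 1, 0), (0, axis None 1), (0, axis None \<i>)}"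

definition chart_plane_ex :: "'n::finite option cpt set" where
  "chart_plane_ex = {y. \<forall>b\<in>normal_basis_ex. y \<bullet> b = 0}"

lemma chart_plane_ex_iff: "y \<in> chart_plane_ex \<longleftrightarrow> Re (head_z y) = 0 \<and> head_w y = 0"
  by (auto simp: chart_plane_ex_def normal_basis_ex_def inner_prod_def inner_axis inner_complex_def
      complex_eq_iff)

lemma normal_basis_ex_subset: "normal_basis_ex \<subseteq> Basis"
  by (auto simp: normal_basis_ex_def Basis_prod_def Basis_vec_def Basis_complex_def)

lemma chart_plane_ex_substandard:
  "chart_plane_ex = {y::'n::finite option cpt. \<forall>i\<in>Basis. i \<notin> Basis - normal_basis_ex \<longrightarrow> y \<bullet> i = 0}"
  using normal_basis_ex_subset unfolding chart_plane_ex_def by blast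

lemma subspace_chart_plane_ex: "subspace chart_plane_ex"
  unfolding chart_plane_ex_substandard by (rule subspace_substandard)

lemma dim_chart_plane_ex: "dim (chart_plane_ex :: 'n::finite option cpt set) = 4 * CARD('n) + 1"
proof -
  have "card (normal_basis_ex :: 'n option cpt set) = 3"
    by (auto simp: normal_basis_ex_def axis_eq_axis prod_eq_iff complex_eq_iff)
  moreover have "card (Basis - normal_basis_ex :: 'n option cpt set)
      = card (Basis :: 'n option cpt set) - card (normal_basis_ex :: 'n option cpt set)"
    using normal_basis_ex_subset by (intro card_Diff_subset finite_subset[OF _ finite_Basis])
  ultimately have "card (Basis - normal_basis_ex :: 'n option cpt set) = 4 * CARD('n) + 1"
    by simp
  then show ?thesis
    unfolding chart_plane_ex_substandard by (subst dim_substandard) auto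
qed

text \<open>The chart replaces the head of a point by the three components of the moment map and the
  imaginary part of \<open>z\<^sub>0 cnj u\<close>; the inverse recovers \<open>|z\<^sub>0|\<^sup>2\<close> as the larger root of
  \<open>\<rho>\<^sup>2 - R \<rho> + |c|\<^sup>2\<close>, where \<open>R = |z\<^sub>0|\<^sup>2 + |w\<^sub>0|\<^sup>2\<close> and \<open>c = z\<^sub>0 cnj w\<^sub>0\<close>.\<close>

definition chart_ex :: "real \<Rightarrow> complex \<Rightarrow> 'n::finite option cpt \<Rightarrow> 'n option cpt" where
  "chart_ex lam u x =
    ((\<chi> k. case k of None \<Rightarrow> Complex (moment_form opI x + 2 * lam) (Im (head_z x * cnj u))
                    | Some j \<Rightarrow> fst x $ Some j),
     (\<chi> k. case k of None \<Rightarrow> Complex (moment_form opS x) (moment_form opT x)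
                    | Some j \<Rightarrow> snd x $ Some j))"

definition inv_head_sum :: "real \<Rightarrow> 'n::finite option cpt \<Rightarrow> real" where
  "inv_head_sum lam y = 2 * lam + tail_z2 y + tail_w2 y - Re (head_z y)"

definition inv_head_pairing :: "'n::finite option cpt \<Rightarrow> complex" where
  "inv_head_pairing y = tail_pairing y + Complex (- Im (head_w y) / 2) (Re (head_w y) / 2)"

definition inv_head_sq :: "real \<Rightarrow> 'n::finite option cpt \<Rightarrow> real" where
  "inv_head_sq lam y = larger_root (inv_head_sum lam y) ((cmod (inv_head_pairing y))\<^sup>2)"

definition inv_head_z :: "real \<Rightarrow> complex \<Rightarrow> 'n::finite option cpt \<Rightarrow> complex" where
  "inv_head_z lam u y = u * Complex (sqrt (inv_head_sq lam y - (Im (head_z y))\<^sup>2)) (Im (head_z y))"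

definition inv_head_w :: "real \<Rightarrow> complex \<Rightarrow> 'n::finite option cpt \<Rightarrow> complex" where
  "inv_head_w lam u y = cnj (inv_head_pairing y) * inv_head_z lam u y / of_real (inv_head_sq lam y)"

definition chart_inv_ex :: "real \<Rightarrow> complex \<Rightarrow> 'n::finite option cpt \<Rightarrow> 'n option cpt" where
  "chart_inv_ex lam u y =
    ((\<chi> k. case k of None \<Rightarrow> inv_head_z lam u y | Some j \<Rightarrow> fst y $ Some j),
     (\<chi> k. case k of None \<Rightarrow> inv_head_w lam u y | Some j \<Rightarrow> snd y $ Some j))"

definition chart_dom_ex :: "complex \<Rightarrow> 'n::finite option cpt set" where
  "chart_dom_ex u = {x. cmod (head_w x) < cmod (head_z x) \<and> Re (head_z x * cnj u) > 0}"

definition chart_cod_ex :: "real \<Rightarrow> 'n::finite option cpt set" where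
  "chart_cod_ex lam = {y. (inv_head_sum lam y)\<^sup>2 - 4 * (cmod (inv_head_pairing y))\<^sup>2 > 0
                         \<and> inv_head_sq lam y - (Im (head_z y))\<^sup>2 > 0}"

lemma chart_ex_nth [simp]:
  "fst (chart_ex lam u x) $ Some j = fst x $ Some j" "snd (chart_ex lam u x) $ Some j = snd x $ Some j"
  "head_z (chart_ex lam u x) = Complex (moment_form opI x + 2 * lam) (Im (head_z x * cnj u))"
  "head_w (chart_ex lam u x) = Complex (moment_form opS x) (moment_form opT x)"
  by (simp_all add: chart_ex_def)

lemma chart_inv_ex_nth [simp]:
  "fst (chart_inv_ex lam u y) $ Some j = fst y $ Some j"
  "snd (chart_inv_ex lam u y) $ Some j = snd y $ Some j"
  "head_z (chart_inv_ex lam u y) = inv_head_z lam u y"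
  "head_w (chart_inv_ex lam u y) = inv_head_w lam u y"
  by (simp_all add: chart_inv_ex_def)

lemma tail_chart_ex [simp]:
  "tail_z2 (chart_ex lam u x) = tail_z2 x" "tail_w2 (chart_ex lam u x) = tail_w2 x"
  "tail_pairing (chart_ex lam u x) = tail_pairing x"
  "tail_z2 (chart_inv_ex lam u y) = tail_z2 y" "tail_w2 (chart_inv_ex lam u y) = tail_w2 y"
  "tail_pairing (chart_inv_ex lam u y) = tail_pairing y"
  by (simp_all add: tail_z2_def tail_w2_def tail_pairing_def)

lemma chart_ex_in_plane: "chart_ex lam u x \<in> chart_plane_ex \<longleftrightarrow> x \<in> level_ex lam"
  unfolding chart_plane_ex_iff level_ex_iff_moment_form by (auto simp: complex_eq_iff)

lemma inv_head_chart_ex: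
  assumes "cmod (head_w x) < cmod (head_z x)" "cmod u = 1"
  shows "inv_head_sum lam (chart_ex lam u x) = (cmod (head_z x))\<^sup>2 + (cmod (head_w x))\<^sup>2"
    and "inv_head_pairing (chart_ex lam u x) = head_z x * cnj (head_w x)"
    and "inv_head_sq lam (chart_ex lam u x) = (cmod (head_z x))\<^sup>2"
    and "inv_head_sq lam (chart_ex lam u x) - (Im (head_z (chart_ex lam u x)))\<^sup>2
      = (Re (head_z x * cnj u))\<^sup>2"
proof -
  show sum: "inv_head_sum lam (chart_ex lam u x) = (cmod (head_z x))\<^sup>2 + (cmod (head_w x))\<^sup>2"
    by (simp add: inv_head_sum_def moment_form_opI)
  show pairing: "inv_head_pairing (chart_ex lam u x) = head_z x * cnj (head_w x)"
    by (simp add: inv_head_pairing_def moment_form_opS moment_form_opT complex_eq_iff field_simps)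
  have "(cmod (head_w x))\<^sup>2 < (cmod (head_z x))\<^sup>2"
    using assms(1) by (simp add: power_strict_mono)
  then show sq: "inv_head_sq lam (chart_ex lam u x) = (cmod (head_z x))\<^sup>2"
    unfolding inv_head_sq_def sum pairing by (simp add: norm_mult power_mult_distrib larger_root_eq)
  have "(cmod (head_z x * cnj u))\<^sup>2 = (cmod (head_z x))\<^sup>2"
    using assms(2) by (simp add: norm_mult)
  then show "inv_head_sq lam (chart_ex lam u x) - (Im (head_z (chart_ex lam u x)))\<^sup>2
      = (Re (head_z x * cnj u))\<^sup>2"
    unfolding sq cmod_power2 by simp
qed

lemma chart_ex_inverse_left:
  assumes x: "x \<in> chart_dom_ex u" and u: "cmod u = 1"
  shows "chart_ex lam u x \<in> chart_cod_ex lam \<and> chart_inv_ex lam u (chart_ex lam u x) = x"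
proof -
  let ?z = "head_z x" and ?w = "head_w x" and ?y = "chart_ex lam u x"
  have lt: "cmod ?w < cmod ?z" and re: "Re (?z * cnj u) > 0"
    using x unfolding chart_dom_ex_def by auto
  note head = inv_head_chart_ex[OF lt u, of lam]
  have z: "inv_head_z lam u ?y = ?z"
  proof -
    have "inv_head_z lam u ?y = u * (?z * cnj u)"
      unfolding inv_head_z_def head(4) using re by (simp add: complex_eq_iff)
    then show ?thesis using unit_mult_cnj[OF u] by (simp add: algebra_simps)
  qed
  have w: "inv_head_w lam u ?y = ?w"
  proof -
    have "?z \<noteq> 0" using lt by auto
    then have "cnj ?z * ?w * ?z / of_real ((cmod ?z)\<^sup>2) = ?w"
      by (simp add: complex_norm_square[symmetric] field_simps)
    then show ?thesis
      unfolding inv_head_w_def z head(2,3) by (simp add: algebra_simps)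
  qed
  have "((cmod ?z)\<^sup>2 + (cmod ?w)\<^sup>2)\<^sup>2 - 4 * ((cmod ?z)\<^sup>2 * (cmod ?w)\<^sup>2) = ((cmod ?z)\<^sup>2 - (cmod ?w)\<^sup>2)\<^sup>2"
    by (simp add: power2_eq_square algebra_simps)
  moreover have "(cmod ?z)\<^sup>2 - (cmod ?w)\<^sup>2 \<noteq> 0"
    using lt by (simp add: power_strict_mono[THEN less_imp_neq[symmetric]])
  ultimately have "(inv_head_sum lam ?y)\<^sup>2 - 4 * (cmod (inv_head_pairing ?y))\<^sup>2 > 0"
    unfolding head(1,2) by (simp add: norm_mult power_mult_distrib)
  moreover have "inv_head_sq lam ?y - (Im (head_z ?y))\<^sup>2 > 0"
    unfolding head(4) using re by simp
  moreover have
    "fst (chart_inv_ex lam u ?y) $ k = fst x $ k \<and> snd (chart_inv_ex lam u ?y) $ k = snd x $ k" for k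
    using z w by (cases k) simp_all
  ultimately show ?thesis
    unfolding chart_cod_ex_def by (simp add: prod_eq_iff vec_eq_iff)
qed

lemma inv_head_props:
  assumes y: "y \<in> chart_cod_ex lam" and u: "cmod u = 1"
  defines "z \<equiv> inv_head_z lam u y" and "w \<equiv> inv_head_w lam u y"
  shows "(cmod z)\<^sup>2 + (cmod w)\<^sup>2 = inv_head_sum lam y"
    and "z * cnj w = inv_head_pairing y"
    and "cmod w < cmod z"
    and "z * cnj u = Complex (sqrt (inv_head_sq lam y - (Im (head_z y))\<^sup>2)) (Im (head_z y))"
    and "sqrt (inv_head_sq lam y - (Im (head_z y))\<^sup>2) > 0"
proof -
  let ?\<rho> = "inv_head_sq lam y" and ?c = "inv_head_pairing y" and ?s = "Im (head_z y)"
  have D: "(inv_head_sum lam y)\<^sup>2 - 4 * (cmod ?c)\<^sup>2 > 0" and rs: "?\<rho> - ?s\<^sup>2 > 0"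
    using y unfolding chart_cod_ex_def by auto
  have \<rho>: "?\<rho> > 0" using rs by (smt (verit) zero_le_power2)
  have R: "inv_head_sum lam y > 0"
  proof (rule ccontr)
    assume "\<not> inv_head_sum lam y > 0"
    moreover have "sqrt ((inv_head_sum lam y)\<^sup>2 - 4 * (cmod ?c)\<^sup>2) \<le> sqrt ((inv_head_sum lam y)\<^sup>2)"
      by (rule real_sqrt_le_mono) simp
    ultimately have "sqrt ((inv_head_sum lam y)\<^sup>2 - 4 * (cmod ?c)\<^sup>2) \<le> - inv_head_sum lam y"
      by simp
    then show False using \<rho> by (simp add: inv_head_sq_def larger_root_def)
  qed
  note root = larger_root_props[OF zero_le_power2 R D, folded inv_head_sq_def]
  show "sqrt (?\<rho> - ?s\<^sup>2) > 0" using rs by simp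
  show zu: "z * cnj u = Complex (sqrt (?\<rho> - ?s\<^sup>2)) ?s"
    unfolding z_def inv_head_z_def using unit_mult_cnj[OF u] by (simp add: algebra_simps)
  have zn: "(cmod z)\<^sup>2 = ?\<rho>"
    unfolding z_def inv_head_z_def using u rs by (simp add: norm_mult cmod_power2)
  have "cmod w = cmod ?c * cmod z / ?\<rho>"
    unfolding w_def inv_head_w_def z_def[symmetric] using \<rho> by (simp add: norm_mult norm_divide)
  then have "(cmod w)\<^sup>2 = (cmod ?c)\<^sup>2 * (cmod z)\<^sup>2 / ?\<rho>\<^sup>2"
    by (simp add: power_mult_distrib power_divide)
  then have wn: "(cmod w)\<^sup>2 = (cmod ?c)\<^sup>2 / ?\<rho>"
    unfolding zn using \<rho> by (simp add: power2_eq_square)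
  show "(cmod z)\<^sup>2 + (cmod w)\<^sup>2 = inv_head_sum lam y"
    unfolding zn wn using root(2) \<rho> by (simp add: field_simps power2_eq_square)
  have "(cmod w)\<^sup>2 < (cmod z)\<^sup>2"
    unfolding zn wn using root(3) \<rho> by (simp add: field_simps power2_eq_square)
  then show "cmod w < cmod z" by (simp add: power2_less_imp_less)
  have "z * cnj z = of_real ?\<rho>" using zn complex_norm_square[of z] by simp
  then show "z * cnj w = ?c"
    unfolding w_def inv_head_w_def z_def[symmetric] using \<rho> by (simp add: field_simps)
qed

lemma chart_ex_inverse_right:
  assumes y: "y \<in> chart_cod_ex lam" and u: "cmod u = 1"
  shows "chart_inv_ex lam u y \<in> chart_dom_ex u \<and> chart_ex lam u (chart_inv_ex lam u y) = y"
proof -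
  let ?x = "chart_inv_ex lam u y"
  note props = inv_head_props[OF y u]
  have "Re (inv_head_z lam u y * cnj u) > 0"
    unfolding props(4) using props(5) by simp
  then have "?x \<in> chart_dom_ex u"
    unfolding chart_dom_ex_def mem_Collect_eq chart_inv_ex_nth using props(3) by (rule conjI[rotated])
  moreover have "head_z (chart_ex lam u ?x) = head_z y"
    using props(1,4) by (simp add: moment_form_opI inv_head_sum_def complex_eq_iff)
  moreover have "head_w (chart_ex lam u ?x) = head_w y"
    using props(2) by (simp add: moment_form_opS moment_form_opT inv_head_pairing_def complex_eq_iff)
  then have "fst (chart_ex lam u ?x) $ k = fst y $ k \<and> snd (chart_ex lam u ?x) $ k = snd y $ k" for k
    using calculation(2) by (cases k) simp_all
  then have "chart_ex lam u ?x = y"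
    by (simp add: prod_eq_iff vec_eq_iff)
  ultimately show ?thesis by blast
qed

lemma smooth_expr_tail_norms:
  "smooth_expr U (tail_z2 :: 'n::finite option cpt \<Rightarrow> real)"
  "smooth_expr U (tail_w2 :: 'n::finite option cpt \<Rightarrow> real)"
  unfolding tail_z2_def[abs_def] tail_w2_def[abs_def]
  by (intro smooth_expr_sum smooth_expr_cmod_power2 csmooth_expr_fst_nth csmooth_expr_snd_nth; simp)+

lemma csmooth_expr_tail_pairing: "csmooth_expr U (tail_pairing :: 'n::finite option cpt \<Rightarrow> complex)"
  unfolding tail_pairing_def[abs_def]
  by (intro csmooth_expr_sum csmooth_expr_mult csmooth_expr_cnj csmooth_expr_fst_nth
      csmooth_expr_snd_nth) auto

lemma smooth_expr_moment_form:
  "smooth_expr U (moment_form opI :: 'n::finite option cpt \<Rightarrow> real)"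
  "smooth_expr U (moment_form opS :: 'n::finite option cpt \<Rightarrow> real)"
  "smooth_expr U (moment_form opT :: 'n::finite option cpt \<Rightarrow> real)"
  unfolding moment_form_opI[abs_def] moment_form_opS[abs_def] moment_form_opT[abs_def]
  by (intro smooth_expr_diff smooth_expr.add smooth_expr_tail_norms smooth_expr_cmod_power2
      smooth_expr_cmult smooth_expr_Re smooth_expr_Im csmooth_expr_diff csmooth_expr_mult
      csmooth_expr_cnj csmooth_expr_tail_pairing csmooth_expr_fst_nth csmooth_expr_snd_nth)+

lemma smooth_expr_chart_ex:
  "\<forall>b\<in>Basis. smooth_expr U (\<lambda>x. chart_ex lam u (x :: 'n::finite option cpt) \<bullet> b)"
  by (rule smooth_expr_cpt_components)
    (auto simp: chart_ex_def intro!: csmooth_expr_case_option csmooth_expr_Complex smooth_expr.add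
      smooth_expr_moment_form smooth_expr.const smooth_expr_Im csmooth_expr_mult csmooth_expr_const
      csmooth_expr_fst_nth csmooth_expr_snd_nth)

lemma inv_head_sq_pos:
  assumes "y \<in> chart_cod_ex lam"
  shows "inv_head_sq lam y > 0"
  using assms unfolding chart_cod_ex_def by (smt (verit) zero_le_power2 mem_Collect_eq)

lemma smooth_expr_chart_inv_ex:
  "\<forall>b\<in>Basis. smooth_expr (chart_cod_ex lam) (\<lambda>y. chart_inv_ex lam u (y :: 'n::finite option cpt) \<bullet> b)"
proof -
  let ?V = "chart_cod_ex lam :: 'n option cpt set"
  have sum: "smooth_expr ?V (inv_head_sum lam)"
    unfolding inv_head_sum_def[abs_def]
    by (intro smooth_expr_diff smooth_expr.add smooth_expr.const smooth_expr_tail_norms smooth_expr_Re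
        csmooth_expr_fst_nth)
  have pairing: "csmooth_expr ?V inv_head_pairing"
    unfolding inv_head_pairing_def[abs_def]
    by (intro csmooth_expr_add csmooth_expr_tail_pairing csmooth_expr_Complex smooth_expr_divide
        smooth_expr_minus smooth_expr_Im smooth_expr_Re csmooth_expr_snd_nth smooth_expr.const) auto
  have sq: "smooth_expr ?V (inv_head_sq lam)"
    unfolding inv_head_sq_def[abs_def] larger_root_def
    by (intro smooth_expr_divide smooth_expr.add sum smooth_expr_sqrt smooth_expr_diff
        smooth_expr_power2 smooth_expr_cmult smooth_expr_cmod_power2 pairing smooth_expr.const)
      (auto simp: chart_cod_ex_def)
  have z: "csmooth_expr ?V (inv_head_z lam u)"
    unfolding inv_head_z_def[abs_def]
    by (intro csmooth_expr_mult csmooth_expr_const csmooth_expr_Complex smooth_expr_sqrt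
        smooth_expr_diff sq smooth_expr_power2 smooth_expr_Im csmooth_expr_fst_nth)
      (auto simp: chart_cod_ex_def)
  have w: "csmooth_expr ?V (inv_head_w lam u)"
    unfolding inv_head_w_def[abs_def]
    by (intro csmooth_expr_divide_real csmooth_expr_mult csmooth_expr_cnj pairing z sq)
      (auto dest: inv_head_sq_pos)
  show ?thesis
    by (rule smooth_expr_cpt_components)
      (auto simp: chart_inv_ex_def intro!: csmooth_expr_case_option z w csmooth_expr_fst_nth
        csmooth_expr_snd_nth)
qed

lemma open_chart_dom_ex: "open (chart_dom_ex u :: 'n::finite option cpt set)"
proof -
  have "chart_dom_ex u =
      {x::'n option cpt. cmod (head_w x) < cmod (head_z x)} \<inter> {x. 0 < Re (head_z x * cnj u)}"
    unfolding chart_dom_ex_def by auto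
  then show ?thesis
    by (auto intro!: open_Int open_Collect_less continuous_intros)
qed

lemma open_chart_cod_ex: "open (chart_cod_ex lam :: 'n::finite option cpt set)"
proof -
  have sum: "continuous_on UNIV (inv_head_sum lam :: 'n option cpt \<Rightarrow> real)"
    unfolding inv_head_sum_def[abs_def]
    by (intro smooth_expr_continuous_on open_UNIV smooth_expr_diff smooth_expr.add smooth_expr.const
        smooth_expr_tail_norms smooth_expr_Re csmooth_expr_fst_nth)
  have pairing: "continuous_on UNIV (\<lambda>y::'n option cpt. (cmod (inv_head_pairing y))\<^sup>2)"
    unfolding inv_head_pairing_def[abs_def]
    by (intro smooth_expr_continuous_on open_UNIV smooth_expr_cmod_power2 csmooth_expr_add
        csmooth_expr_tail_pairing csmooth_expr_Complex smooth_expr_divide smooth_expr_minus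
        smooth_expr_Im smooth_expr_Re csmooth_expr_snd_nth smooth_expr.const) auto
  have
    "continuous_on UNIV (\<lambda>y::'n option cpt. (inv_head_sum lam y)\<^sup>2 - 4 * (cmod (inv_head_pairing y))\<^sup>2)"
    "continuous_on UNIV (\<lambda>y::'n option cpt. inv_head_sq lam y - (Im (head_z y))\<^sup>2)"
    unfolding inv_head_sq_def larger_root_def using sum pairing by (auto intro!: continuous_intros)
  then show ?thesis
    unfolding chart_cod_ex_def Collect_conj_eq by (intro open_Int open_Collect_less continuous_on_const)
qed

lemma flat_chart_ex:
  assumes "cmod u = 1"
  shows "flat_chart (level_ex lam) (chart_dom_ex u) (chart_cod_ex lam)
    (chart_ex lam u) (chart_inv_ex lam u) (chart_plane_ex :: 'n::finite option cpt set)"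
  unfolding flat_chart_def
  using assms open_chart_dom_ex open_chart_cod_ex chart_ex_inverse_left chart_ex_inverse_right
    smooth_expr_chart_ex smooth_expr_chart_inv_ex subspace_chart_plane_ex chart_ex_in_plane
  by blast

text \<open>Charts with this property identify the tangent spaces of the level set.\<close>

definition moment_chart :: "'n::finite option cpt set \<Rightarrow> ('n option cpt \<Rightarrow> 'n option cpt) \<Rightarrow> bool" where
  "moment_chart U \<phi> \<longleftrightarrow>
    (\<forall>b\<in>normal_basis_ex. \<exists>A\<in>{opI, opS, opT}. \<exists>\<kappa> d. \<forall>x\<in>U. \<phi> x \<bullet> b = \<kappa> * moment_form A x + d)"

lemma moment_chart_ex: "moment_chart U (chart_ex lam u :: 'n::finite option cpt \<Rightarrow> _)"
proof -
  have "chart_ex lam u x \<bullet> (axis None 1, 0) = 1 * moment_form opI x + 2 * lam"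
    "chart_ex lam u x \<bullet> (0, axis None 1) = 1 * moment_form opS x + 0"
    "chart_ex lam u x \<bullet> (0, axis None \<i>) = 1 * moment_form opT x + 0" for x :: "'n option cpt"
    by (simp_all add: chart_ex_def inner_prod_def inner_axis inner_complex_def)
  then show ?thesis
    unfolding moment_chart_def normal_basis_ex_def by blast
qed

lemma moment_form_opS_swap:
  "moment_form opI (opS x) = moment_form opI x"
  "moment_form opS (opS x) = - moment_form opS x"
  "moment_form opT (opS x) = moment_form opT x"
proof -
  have "tail_z2 (opS x) = tail_w2 x" "tail_w2 (opS x) = tail_z2 x"
    "tail_pairing (opS x) = cnj (tail_pairing x)"
    by (simp_all add: tail_z2_def tail_w2_def tail_pairing_def opS_def mult.commute)
  then show "moment_form opI (opS x) = moment_form opI x"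
    "moment_form opS (opS x) = - moment_form opS x"
    "moment_form opT (opS x) = moment_form opT x"
    by (simp_all add: moment_form_opI moment_form_opS moment_form_opT opS_def)
qed

lemma level_ex_opS_iff: "opS z \<in> level_ex lam \<longleftrightarrow> z \<in> level_ex lam"
  by (simp add: level_ex_iff_moment_form moment_form_opS_swap)

lemma moment_chart_compose_opS:
  fixes \<phi> :: "'n::finite option cpt \<Rightarrow> 'n option cpt"
  assumes "moment_chart U \<phi>"
  shows "moment_chart (opS -` U) (\<lambda>x. \<phi> (opS x))"
  unfolding moment_chart_def
proof
  fix b :: "'n option cpt" assume "b \<in> normal_basis_ex"
  then obtain A \<kappa> d where A: "A \<in> {opI, opS, opT}" and \<phi>: "\<forall>x\<in>U. \<phi> x \<bullet> b = \<kappa> * moment_form A x + d"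
    using assms unfolding moment_chart_def by blast
  obtain \<sigma> where \<sigma>: "\<And>x. moment_form A (opS x) = \<sigma> * moment_form A x"
  proof -
    from A consider "A = opI" | "A = opS" | "A = opT" by blast
    then show ?thesis
    proof cases
      case 2
      then show ?thesis by (intro that[of "-1"]) (simp add: moment_form_opS_swap)
    qed (auto intro: that[of 1] simp: moment_form_opS_swap)
  qed
  have "\<phi> (opS x) \<bullet> b = (\<kappa> * \<sigma>) * moment_form A x + d" if "x \<in> opS -` U" for x
    using \<phi> that by (simp add: \<sigma>)
  then show "\<exists>A\<in>{opI, opS, opT}. \<exists>\<kappa> d. \<forall>x\<in>opS -` U. \<phi> (opS x) \<bullet> b = \<kappa> * moment_form A x + d"
    using A by blast
qed

lemma in_chart_dom_ex:
  assumes "cmod (head_w p) < cmod (head_z p)"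
  defines "u \<equiv> head_z p / of_real (cmod (head_z p))"
  shows "cmod u = 1" "p \<in> chart_dom_ex u"
proof -
  have z: "head_z p \<noteq> 0" using assms(1) by auto
  then show "cmod u = 1" by (simp add: u_def norm_divide)
  have "head_z p * cnj u = of_real (cmod (head_z p))"
    using z by (simp add: u_def complex_norm_square[symmetric] power2_eq_square)
  then have "Re (head_z p * cnj u) > 0"
    using z by simp
  then show "p \<in> chart_dom_ex u"
    unfolding chart_dom_ex_def using assms(1) by blast
qed

lemma flat_chart_at_level_ex:
  assumes "p \<in> level_ex lam" "lam > 0"
  shows "\<exists>U V \<phi> \<psi>. p \<in> U
    \<and> flat_chart (level_ex lam) U V \<phi> \<psi> (chart_plane_ex :: 'n::finite option cpt set)
    \<and> moment_chart U \<phi>"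
proof (cases "component_ex p")
  case True
  then show ?thesis
    using in_chart_dom_ex[of p] flat_chart_ex moment_chart_ex by (fastforce simp: component_ex_def)
next
  case False
  then have "cmod (head_w (opS p)) < cmod (head_z (opS p))"
    using level_ex_head_norms_differ[OF assms] by (auto simp: component_ex_def opS_def)
  then obtain u where "cmod u = 1" "opS p \<in> chart_dom_ex u"
    using in_chart_dom_ex by blast
  then show ?thesis
    using flat_chart_compose_opS[OF flat_chart_ex level_ex_opS_iff[symmetric]]
      moment_chart_compose_opS[OF moment_chart_ex]
    by blast
qed

lemma level_ex_embedded:
  assumes "lam > 0"
  shows "embedded_submanifold (4 * CARD('n) + 1) (level_ex lam :: 'n::finite option cpt set)"
  using flat_chart_at_level_ex[OF _ assms] dim_chart_plane_ex
  by (intro embedded_submanifold_if_flat_charts) blast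

lemma tangent_space_level_ex_subset:
  assumes "Y \<in> tangent_space (level_ex lam) p"
  shows "Y \<in> frame_perp (circle_generator p)"
proof -
  obtain \<gamma> where \<gamma>: "\<gamma> 0 = p" "\<And>t. \<gamma> t \<in> level_ex lam" and d: "(\<gamma> has_derivative (\<lambda>t. t *\<^sub>R Y)) (at 0)"
    using assms unfolding tangent_space_def has_vector_derivative_def by blast
  have "gH (A (circle_generator p)) Y = 0" if A: "A \<in> {opI, opS, opT}" for A
  proof -
    have "moment_form A (\<gamma> t) = moment_form A (\<gamma> 0)" for t
      using A \<gamma>(2)[of t] \<gamma>(2)[of 0] by (auto simp: level_ex_iff_moment_form)
    then have "(\<lambda>t. moment_form A (\<gamma> t)) = (\<lambda>t. moment_form A (\<gamma> 0))"
      by (rule ext)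
    then have "((\<lambda>t. moment_form A (\<gamma> t)) has_derivative (\<lambda>h. 0)) (at 0)"
      by simp
    moreover have "((\<lambda>t. moment_form A (\<gamma> t)) has_derivative
        (\<lambda>h. 2 * gH (A (circle_generator p)) (h *\<^sub>R Y))) (at 0)"
      using has_derivative_moment_form[OF A d] \<gamma>(1) by simp
    ultimately have "(\<lambda>h. 2 * gH (A (circle_generator p)) (h *\<^sub>R Y)) = (\<lambda>h. 0)"
      using has_derivative_unique by blast
    from fun_cong[OF this, of 1] show ?thesis by simp
  qed
  then show ?thesis unfolding frame_perp_def by blast
qed

lemma flat_chart_inverse_derivative:
  assumes chart: "flat_chart Z U V \<phi> \<psi> L" and p: "p \<in> U" and D\<phi>: "(\<phi> has_derivative D\<phi>) (at p)"
  obtains D\<psi> where "(\<psi> has_derivative D\<psi>) (at (\<phi> p))" "\<And>h. D\<psi> (D\<phi> h) = h"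
proof -
  have U: "open U" and V: "open V" and inv: "\<forall>x\<in>U. \<phi> x \<in> V \<and> \<psi> (\<phi> x) = x"
    and smooth: "\<forall>b\<in>Basis. smooth_expr V (\<lambda>y. \<psi> y \<bullet> b)"
    using chart unfolding flat_chart_def by auto
  have "\<psi> differentiable (at (\<phi> p))"
    using smooth_on_differentiable[OF smooth_expr_imp_smooth_on_componentwise[OF V smooth]] inv p
    by blast
  then obtain D\<psi> where D\<psi>: "(\<psi> has_derivative D\<psi>) (at (\<phi> p))"
    unfolding differentiable_def by blast
  have "((\<lambda>x. \<psi> (\<phi> x)) has_derivative (\<lambda>h. D\<psi> (D\<phi> h))) (at p)"
    using diff_chain_at[OF D\<phi> D\<psi>] by (simp add: o_def)
  moreover have "((\<lambda>x. \<psi> (\<phi> x)) has_derivative (\<lambda>h. h)) (at p)"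
    by (rule has_derivative_transform_within_open[OF has_derivative_ident U p]) (use inv in auto)
  ultimately have "(\<lambda>h. D\<psi> (D\<phi> h)) = (\<lambda>h. h)"
    by (rule has_derivative_unique)
  with D\<psi> show ?thesis
    using that fun_cong by metis
qed

text \<open>The curve is the pull-back of a straight line in \<open>L\<close>.\<close>

lemma flat_chart_tangent:
  assumes chart: "flat_chart Z U V \<phi> \<psi> L" and p: "p \<in> U" "p \<in> Z"
    and D\<phi>: "(\<phi> has_derivative D\<phi>) (at p)" and Y: "D\<phi> Y \<in> L"
  shows "Y \<in> tangent_space Z p"
proof -
  have V: "open V" and inv1: "\<forall>x\<in>U. \<phi> x \<in> V \<and> \<psi> (\<phi> x) = x"
    and inv2: "\<forall>y\<in>V. \<psi> y \<in> U \<and> \<phi> (\<psi> y) = y" and L: "subspace L" and LZ: "\<forall>x\<in>U. \<phi> x \<in> L \<longleftrightarrow> x \<in> Z"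
    using chart unfolding flat_chart_def by auto
  have pV: "\<phi> p \<in> V" using inv1 p by blast
  obtain D\<psi> where D\<psi>: "(\<psi> has_derivative D\<psi>) (at (\<phi> p))" and inv: "\<And>h. D\<psi> (D\<phi> h) = h"
    using flat_chart_inverse_derivative[OF chart p(1) D\<phi>] by blast
  define h where "h t = \<phi> p + t *\<^sub>R D\<phi> Y" for t
  define \<gamma> where "\<gamma> t = (if h t \<in> V then \<psi> (h t) else p)" for t
  have "\<gamma> t \<in> Z" for t
  proof (cases "h t \<in> V")
    case True
    have "\<phi> p \<in> L"
      using LZ[rule_format, OF p(1)] p(2) by simp
    then have "h t \<in> L"
      unfolding h_def using L Y by (intro subspace_add subspace_scale)
    moreover have "\<psi> (h t) \<in> U" "\<phi> (\<psi> (h t)) = h t"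
      using inv2 True by auto
    ultimately have "\<psi> (h t) \<in> Z"
      using LZ[rule_format, of "\<psi> (h t)"] by simp
    then show ?thesis using True by (simp add: \<gamma>_def)
  qed (simp add: \<gamma>_def p)
  moreover have "\<gamma> 0 = p"
    using pV inv1 p by (simp add: \<gamma>_def h_def)
  moreover have "(\<gamma> has_derivative (\<lambda>t. t *\<^sub>R Y)) (at 0)"
  proof -
    have "(h has_derivative (\<lambda>t. t *\<^sub>R D\<phi> Y)) (at 0)"
      unfolding h_def by (auto intro!: derivative_eq_intros)
    moreover have "(\<psi> has_derivative D\<psi>) (at (h 0))"
      using D\<psi> by (simp add: h_def)
    ultimately have "((\<psi> \<circ> h) has_derivative (D\<psi> \<circ> (\<lambda>t. t *\<^sub>R D\<phi> Y))) (at 0)"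
      by (rule diff_chain_at)
    moreover have "D\<psi> (t *\<^sub>R D\<phi> Y) = t *\<^sub>R Y" for t
      using linear_scale[OF has_derivative_linear[OF D\<psi>]] inv by simp
    ultimately have "((\<lambda>t. \<psi> (h t)) has_derivative (\<lambda>t. t *\<^sub>R Y)) (at 0)"
      by (simp add: o_def)
    moreover have "open (h -` V)"
      unfolding h_def by (intro continuous_open_vimage V) (auto intro!: continuous_intros)
    moreover have "0 \<in> h -` V"
      using pV by (simp add: h_def)
    ultimately show ?thesis
      by (rule has_derivative_transform_within_open) (simp add: \<gamma>_def)
  qed
  ultimately show ?thesis
    unfolding tangent_space_def has_vector_derivative_def by blast
qed

lemma moment_chart_derivative_in_plane:
  fixes \<phi> :: "'n::finite option cpt \<Rightarrow> 'n option cpt"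
  assumes "moment_chart U \<phi>" "open U" "p \<in> U" "(\<phi> has_derivative D\<phi>) (at p)"
    and Y: "Y \<in> frame_perp (circle_generator p)"
  shows "D\<phi> Y \<in> chart_plane_ex"
  unfolding chart_plane_ex_def
proof (intro CollectI ballI)
  fix b :: "'n option cpt" assume "b \<in> normal_basis_ex"
  then obtain A \<kappa> d where A: "A \<in> {opI, opS, opT}" and \<phi>: "\<forall>x\<in>U. \<phi> x \<bullet> b = \<kappa> * moment_form A x + d"
    using assms(1) unfolding moment_chart_def by blast
  have D1: "((\<lambda>x. \<phi> x \<bullet> b) has_derivative (\<lambda>h. D\<phi> h \<bullet> b)) (at p)"
    using assms(4) by (intro derivative_eq_intros) auto
  have "((\<lambda>x. \<kappa> * moment_form A x + d) has_derivative
      (\<lambda>h. \<kappa> * (2 * gH (A (circle_generator p)) h))) (at p)"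
    using has_derivative_moment_form[OF A has_derivative_ident, where x = p and s = UNIV]
    by (auto intro!: derivative_eq_intros)
  then have "((\<lambda>x. \<phi> x \<bullet> b) has_derivative (\<lambda>h. \<kappa> * (2 * gH (A (circle_generator p)) h))) (at p)"
    by (rule has_derivative_transform_within_open[OF _ assms(2,3)]) (use \<phi> in auto)
  with D1 have "(\<lambda>h. D\<phi> h \<bullet> b) = (\<lambda>h. \<kappa> * (2 * gH (A (circle_generator p)) h))"
    by (rule has_derivative_unique)
  moreover have "gH (A (circle_generator p)) Y = 0"
    using A Y unfolding frame_perp_def by auto
  ultimately show "D\<phi> Y \<bullet> b = 0" by (metis mult_zero_right)
qed

lemma tangent_space_level_ex:
  assumes "p \<in> level_ex lam" "lam > 0"
  shows "tangent_space (level_ex lam) p = frame_perp (circle_generator p)"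
proof
  show "tangent_space (level_ex lam) p \<subseteq> frame_perp (circle_generator p)"
    using tangent_space_level_ex_subset by blast
  obtain U V \<phi> \<psi> where chart: "p \<in> U" "flat_chart (level_ex lam) U V \<phi> \<psi> chart_plane_ex"
    "moment_chart U \<phi>"
    using flat_chart_at_level_ex[OF assms] by blast
  have "smooth_on U \<phi>"
    using chart(2) smooth_expr_imp_smooth_on_componentwise unfolding flat_chart_def by blast
  then obtain D\<phi> where D\<phi>: "(\<phi> has_derivative D\<phi>) (at p)"
    using smooth_on_differentiable[OF _ chart(1)] unfolding differentiable_def by blast
  show "frame_perp (circle_generator p) \<subseteq> tangent_space (level_ex lam) p"
    using flat_chart_tangent[OF chart(2,1) assms(1) D\<phi>]
      moment_chart_derivative_in_plane[OF chart(3) _ chart(1) D\<phi>]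
      chart(2) unfolding flat_chart_def by blast
qed

section \<open>The quotient map is a submersion\<close>

lemma derivative_along_curve:
  assumes \<gamma>: "(\<gamma> has_derivative (\<lambda>t. t *\<^sub>R Y)) (at 0)" "\<gamma> 0 = p"
    and g: "(g has_derivative Dg) (at p)" and U: "open U" "p \<in> U"
    and on_curve: "\<And>t. \<gamma> t \<in> U \<Longrightarrow> g (\<gamma> t) = c + t *\<^sub>R y"
  shows "Dg Y = y"
proof -
  have "((\<lambda>t. g (\<gamma> t)) has_derivative (\<lambda>t. Dg (t *\<^sub>R Y))) (at 0)"
    using diff_chain_at[OF \<gamma>(1)] g \<gamma>(2) by (simp add: o_def)
  moreover have "((\<lambda>t. g (\<gamma> t)) has_derivative (\<lambda>t. t *\<^sub>R y)) (at 0)"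
  proof (rule has_derivative_transform_eventually)
    show "((\<lambda>t. c + t *\<^sub>R y) has_derivative (\<lambda>t. t *\<^sub>R y)) (at 0)"
      by (auto intro!: derivative_eq_intros)
    have "(\<gamma> \<longlongrightarrow> p) (at 0)"
      using has_derivative_continuous[OF \<gamma>(1)] \<gamma>(2) by (simp add: isCont_def)
    then have "\<forall>\<^sub>F t in at 0. \<gamma> t \<in> U"
      using U by (rule topological_tendstoD)
    then show "\<forall>\<^sub>F t in at 0. c + t *\<^sub>R y = g (\<gamma> t)"
      by eventually_elim (simp add: on_curve)
    show "c + 0 *\<^sub>R y = g (\<gamma> 0)"
      using on_curve[of 0] \<gamma>(2) U(2) by simp
  qed simp
  ultimately have "(\<lambda>t. Dg (t *\<^sub>R Y)) = (\<lambda>t. t *\<^sub>R y)"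
    by (rule has_derivative_unique)
  from fun_cong[OF this, of 1] show ?thesis by simp
qed

lemma bounded_linear_torus_act: "bounded_linear (torus_act t :: 'd::finite cpt \<Rightarrow> _)"
proof -
  have "linear (torus_act t :: 'd cpt \<Rightarrow> _)"
    by (rule linearI) (simp_all add: torus_act_def vec_eq_iff algebra_simps scaleR_conv_of_real)
  then show ?thesis using linear_conv_bounded_linear by blast
qed

text \<open>The curve is the section along the line, rotated by the gauge phase of \<open>p\<close>.\<close>

lemma quotient_coords_line:
  assumes "p \<in> level_ex lam" "lam > 0"
  obtains \<gamma> Y where "\<gamma> 0 = p" "\<And>t. \<gamma> t \<in> level_ex lam"
    "\<And>t. quotient_coords (\<gamma> t) = quotient_coords p + t *\<^sub>R y"
    "(\<gamma> has_derivative (\<lambda>t. t *\<^sub>R Y)) (at 0)"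
proof -
  let ?b = "component_ex p" and ?x = "quotient_coords p" and ?u = "gauge_phase p"
  have u: "cmod ?u = 1" by (rule gauge_phase_unit[OF assms])
  have "section_ex lam ?b differentiable (at ?x)"
    using smooth_on_differentiable[OF smooth_on_section[OF assms(2)]] by simp
  then obtain Ds where Ds: "(section_ex lam ?b has_derivative Ds) (at ?x)"
    unfolding differentiable_def by blast
  define \<gamma> where "\<gamma> t = torus_act (circle_ex ?u) (section_ex lam ?b (?x + t *\<^sub>R y))" for t
  have "((\<lambda>t. ?x + t *\<^sub>R y) has_derivative (\<lambda>t. t *\<^sub>R y)) (at 0)"
    by (auto intro!: derivative_eq_intros)
  from diff_chain_at[OF this] Ds
  have "((\<lambda>t. section_ex lam ?b (?x + t *\<^sub>R y)) has_derivative (\<lambda>t. Ds (t *\<^sub>R y))) (at 0)"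
    by (simp add: o_def)
  then have "(\<gamma> has_derivative (\<lambda>t. torus_act (circle_ex ?u) (Ds (t *\<^sub>R y)))) (at 0)"
    unfolding \<gamma>_def by (rule bounded_linear.has_derivative[OF bounded_linear_torus_act])
  moreover have "torus_act (circle_ex ?u) (Ds (t *\<^sub>R y)) = t *\<^sub>R torus_act (circle_ex ?u) (Ds y)" for t
    using linear_scale[OF has_derivative_linear[OF Ds]]
      linear_scale[OF bounded_linear.linear[OF bounded_linear_torus_act]] by simp
  ultimately have "(\<gamma> has_derivative (\<lambda>t. t *\<^sub>R torus_act (circle_ex ?u) (Ds y))) (at 0)"
    by simp
  moreover have "\<gamma> 0 = p"
    using level_ex_eq_act_section[OF assms] by (simp add: \<gamma>_def)
  moreover have "\<gamma> t \<in> level_ex lam" for t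
    unfolding \<gamma>_def by (rule circle_act_level_ex[OF u section_in_level_ex[OF assms(2)]])
  moreover have "quotient_coords (\<gamma> t) = ?x + t *\<^sub>R y" for t
    unfolding \<gamma>_def circle_act_quotient_coords[OF u] quotient_coords_section[OF assms(2)] ..
  ultimately show ?thesis using that by blast
qed

lemma quotient_coords_derivative_surj:
  assumes p: "p \<in> level_ex lam" "lam > 0" and U: "open U" "p \<in> U" and g: "smooth_on U g"
    and g_eq: "\<forall>x\<in>U \<inter> level_ex lam. g x = quotient_coords x"
  shows "frechet_derivative g (at p) ` tangent_space (level_ex lam) p = UNIV"
proof -
  have D: "(g has_derivative frechet_derivative g (at p)) (at p)"
    using smooth_on_differentiable[OF g U(2)] frechet_derivative_works by blast
  have "y \<in> frechet_derivative g (at p) ` tangent_space (level_ex lam) p" for y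
  proof -
    obtain \<gamma> Y where \<gamma>: "\<gamma> 0 = p" "\<And>t. \<gamma> t \<in> level_ex lam"
      "\<And>t. quotient_coords (\<gamma> t) = quotient_coords p + t *\<^sub>R y"
      and d: "(\<gamma> has_derivative (\<lambda>t. t *\<^sub>R Y)) (at 0)"
      using quotient_coords_line[OF p] by blast
    have "Y \<in> tangent_space (level_ex lam) p"
      unfolding tangent_space_def has_vector_derivative_def using \<gamma>(1,2) d by blast
    moreover have "frechet_derivative g (at p) Y = y"
      by (rule derivative_along_curve[OF d \<gamma>(1) D U, where c = "quotient_coords p"])
        (use g_eq \<gamma>(2,3) in auto)
    ultimately show ?thesis by (metis image_eqI)
  qed
  then show ?thesis by blast
qed

lemma level_ex_nonzero: "p \<in> level_ex lam \<Longrightarrow> lam > 0 \<Longrightarrow> p \<noteq> 0"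
  using level_ex_head_norms_differ by fastforce

lemma omega_kernel_level_ex:
  assumes "p \<in> level_ex lam" "lam > 0" "A \<in> {opI, opS, opT}"
  shows "{Y \<in> tangent_space (level_ex lam) p. \<forall>Y'\<in>tangent_space (level_ex lam) p. omega A Y Y' = 0}
    = tangent_space (orbit (kerN (u_ex :: 'n::finite option \<Rightarrow> 'n \<Rightarrow> int)) p) p"
  unfolding tangent_space_level_ex[OF assms(1,2)] orbit_tangent_ex[OF level_ex_nonzero[OF assms(1,2)]]
    omega_def
  by (rule omega_kernel_frame_perp[OF level_ex_generator_nonnull[OF assms(1,2)] assms(3)])

theorem mainTheorem19:
  fixes lam :: real
  assumes "lam > 0"
  defines "Z \<equiv> level_set (u_ex :: 'n::finite option \<Rightarrow> 'n \<Rightarrow> int) (l1_ex lam) (\<lambda>_. 0)"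
      and "N \<equiv> kerN (u_ex :: 'n::finite option \<Rightarrow> 'n \<Rightarrow> int)"
  shows
    "(\<forall>p\<in>Z. \<forall>t\<in>N. torus_act t p = p \<longrightarrow> t = (\<lambda>_. 1))
   \<and> embedded_submanifold (4 * CARD('n) + 1) Z
   \<and> (\<exists>(qb :: 'n option cpt \<Rightarrow> bool) (qx :: 'n option cpt \<Rightarrow> real^('n \<times> 4)).
        (\<forall>p\<in>Z. \<exists>U. open U \<and> p \<in> U \<and> (\<forall>x\<in>U \<inter> Z. qb x = qb p))
      \<and> smooth_on_set Z qx
      \<and> (\<forall>p\<in>Z. \<forall>U g. open U \<and> p \<in> U \<and> smooth_on U g \<and> (\<forall>x\<in>U \<inter> Z. g x = qx x)
              \<longrightarrow> frechet_derivative g (at p) ` tangent_space Z p = UNIV)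
      \<and> (\<forall>p\<in>Z. \<forall>p'\<in>Z. (qb p' = qb p \<and> qx p' = qx p) \<longleftrightarrow> p' \<in> orbit N p)
      \<and> (\<forall>b x. \<exists>p\<in>Z. qb p = b \<and> qx p = x)
      \<and> (\<forall>p\<in>Z. sigma p \<in> Z \<and> qb (sigma p) = (\<not> qb p)))
   \<and> (\<forall>p\<in>Z. \<forall>A\<in>{opI, opS, opT}.
        {Y\<in>tangent_space Z p. \<forall>Y'\<in>tangent_space Z p. omega A Y Y' = 0}
          = tangent_space (orbit N p) p)"
proof -
  let ?Z = "level_ex lam :: 'n option cpt set" and ?N = "kerN (u_ex :: 'n option \<Rightarrow> 'n \<Rightarrow> int)"
  have free: "\<forall>p\<in>?Z. \<forall>t\<in>?N. torus_act t p = p \<longrightarrow> t = (\<lambda>_. 1)"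
    using circle_act_free[OF _ assms(1)] by blast
  have submersion: "\<forall>p\<in>?Z. \<forall>U g. open U \<and> p \<in> U \<and> smooth_on U g \<and> (\<forall>x\<in>U \<inter> ?Z. g x = quotient_coords x)
      \<longrightarrow> frechet_derivative g (at p) ` tangent_space ?Z p = UNIV"
    using quotient_coords_derivative_surj[OF _ assms(1)] by blast
  have fibres: "\<forall>p\<in>?Z. \<forall>p'\<in>?Z.
      (component_ex p' = component_ex p \<and> quotient_coords p' = quotient_coords p) \<longleftrightarrow> p' \<in> orbit ?N p"
    using quotient_fibre[OF _ _ assms(1)] by blast
  have swap: "\<forall>p\<in>?Z. sigma p \<in> ?Z \<and> component_ex (sigma p) = (\<not> component_ex p)"
    using sigma_level_ex component_sigma[OF _ assms(1)] by blast
  have nondegenerate: "\<forall>p\<in>?Z. \<forall>A\<in>{opI, opS, opT}.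
      {Y\<in>tangent_space ?Z p. \<forall>Y'\<in>tangent_space ?Z p. omega A Y Y' = 0} = tangent_space (orbit ?N p) p"
    using omega_kernel_level_ex[OF _ assms(1)] by blast
  have Z: "Z = ?Z"
    unfolding Z_def by (rule level_set_ex)
  show ?thesis
    unfolding Z N_def
    using free submersion fibres swap nondegenerate level_ex_embedded[OF assms(1)]
      component_ex_locally_constant[OF assms(1)] smooth_on_set_quotient_coords[OF assms(1)]
      quotient_coords_onto[OF assms(1)]
    by (intro conjI exI[of _ component_ex] exI[of _ quotient_coords] allI) assumption+
qed

end
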